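(* Let $f:\Sigma\to\mathbb{S}^4_1$ be a non-isotropic conformal marginally trapped immersion, $\{N_1,N_2\}$ a positively oriented orthonormal normal frame, and $z$ a local complex coordinate. Then the canonical lift of the null Gauss map $G$ with respect to $z$ is $$Y=\frac{e^{u}}{\sqrt2\,|\xi_1-\xi_2|}(N_1+N_2),$$ which is independent of the choice of positively oriented frame. Moreover $V^\perp=\mathbb{R}f$ and the normal Hopf differential of $G$ is $$\kappa=\frac{(\xi_1-\xi_2)e^{u}}{\sqrt2\,|\xi_1-\xi_2|}\,f ,$$ so that, writing $\xi_1-\xi_2=|\xi_1-\xi_2|e^{i\theta}$ and $\kappa=kf$, one has $k=\frac{e^{u+i\theta}}{\sqrt2}$ and $e^{2u}=2|k|^2$. Furthermore $f_z=\sqrt2\,e^{u+i\theta}\big((u+i\theta)_{\bar z}Y-Y_{\bar z}\big)$.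
   Context: $\mathbb{R}^5_1$ is $\mathbb{R}^5$ with $\langle x,y\rangle=x_0y_0+x_1y_1+x_2y_2+x_3y_3-x_4y_4$ (complex-bilinearly extended), $\mathbb{S}^4_1=\{\langle x,x\rangle=1\}$, future pointing means $\langle X,e_4\rangle<0$; $\mathcal L$ is the light cone, $\mathbb{S}^3\cong P(\mathcal L)$. $f$ conformal spacelike immersion, $\langle f_z,f_{\bar z}\rangle=e^{2u}$. Positively oriented orthonormal normal frame: $\langle N_1,N_1\rangle=1,\langle N_2,N_2\rangle=-1,\langle N_1,N_2\rangle=0$, $N_2$ future pointing, orientation of $\nu(f)$. $\xi_1=\langle f_{zz},N_1\rangle$, $\xi_2=-\langle f_{zz},N_2\rangle$. $\mathbf H$ defined by $f_{z\bar z}=-e^{2u}f+e^{2u}\mathbf H$; marginally trapped: $\langle\mathbf H,\mathbf H\rangle=0$, orientation with $\mathbf H=h(N_1+N_2)$. Non-isotropic: $\xi_1^2-\xi_2^2$ never zero. Null Gauss map $G=[N_1+N_2]$. For a conformal immersion $\psi:\Sigma\to P(\mathcal L)$ and coordinate $z$: the canonical lift is the lift $Y$ into the future light cone with $\langle Y_z,Y_{\bar z}\rangle=\tfrac12$; $V=\mathrm{span}\{Y,Y_z,Y_{\bar z},Y_{z\bar z}\}$; $N\in\Gamma(V)$ is the unique section with $\langle N,N\rangle=\langle N,Y_z\rangle=0$, $\langle Y,N\rangle=-1$; the Schwarzian $s=2\langle Y_{zz},N\rangle$ and the normal Hopf differential $\kappa\in\Gamma(V^\perp\otimes\mathbb C)$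 are defined by $Y_{zz}+\frac s2Y=\kappa$. *)

theory Defs
  imports "HOL-Analysis.Analysis"
begin

text \<open>Local setting: the surface is studied in a complex coordinate chart, i.e.
  on an open set U of the complex plane with coordinate z.  Vectors of the
  (complexified) Minkowski space R^5_1 are elements of complex^5; real vectors are
  those with vanishing imaginary parts.\<close>

definition lip :: "complex^5 \<Rightarrow> complex^5 \<Rightarrow> complex" where
  "lip x y = x$0*y$0 + x$1*y$1 + x$2*y$2 + x$3*y$3 - x$4*y$4"

definition e4 :: "complex^5" where
  "e4 = axis 4 1"

definition realv :: "complex^5 \<Rightarrow> bool" where
  "realv v \<longleftrightarrow> (\<forall>i. Im (v$i) = 0)"

definition future :: "complex^5 \<Rightarrow> bool" where
  "future v \<longleftrightarrow> Re (lip v e4) < 0"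

definition dx :: "(complex \<Rightarrow> 'a::real_normed_vector) \<Rightarrow> complex \<Rightarrow> 'a" where
  "dx F z = vector_derivative (\<lambda>t. F (z + complex_of_real t)) (at 0)"

definition dy :: "(complex \<Rightarrow> 'a::real_normed_vector) \<Rightarrow> complex \<Rightarrow> 'a" where
  "dy F z = vector_derivative (\<lambda>t. F (z + \<i> * complex_of_real t)) (at 0)"

coinductive smooth_on :: "complex set \<Rightarrow> (complex \<Rightarrow> 'a::real_normed_vector) \<Rightarrow> bool" where
  "F differentiable_on U \<Longrightarrow> smooth_on U (dx F) \<Longrightarrow> smooth_on U (dy F) \<Longrightarrow> smooth_on U F"

definition Dz :: "(complex \<Rightarrow> complex^5) \<Rightarrow> complex \<Rightarrow> complex^5" where
  "Dz F z = (1/2) *s (dx F z - \<i> *s dy F z)"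

definition Dzb :: "(complex \<Rightarrow> complex^5) \<Rightarrow> complex \<Rightarrow> complex^5" where
  "Dzb F z = (1/2) *s (dx F z + \<i> *s dy F z)"

definition dzc :: "(complex \<Rightarrow> complex) \<Rightarrow> complex \<Rightarrow> complex" where
  "dzc F z = (dx F z - \<i> * dy F z) / 2"

definition dzbc :: "(complex \<Rightarrow> complex) \<Rightarrow> complex \<Rightarrow> complex" where
  "dzbc F z = (dx F z + \<i> * dy F z) / 2"

text \<open>Canonical lift: Y is the canonical lift with respect to z (on U) of the
  conformal immersion \<psi> into P(L) represented by the (nonvanishing) lift Phi,
  i.e. \<psi>(z) = [Phi(z)].  The conformality of \<psi> is part of the requirement.\<close>
definition canonical_lift :: "complex set \<Rightarrow> (complex \<Rightarrow> complex^5) \<Rightarrow> (complex \<Rightarrow> complex^5) \<Rightarrow> bool" where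
  "canonical_lift U Phi Y \<longleftrightarrow> smooth_on U Y \<and>
     (\<forall>z\<in>U. realv (Y z) \<and> (\<exists>c::real. Y z = complex_of_real c *s Phi z) \<and>
        lip (Y z) (Y z) = 0 \<and> future (Y z) \<and>
        lip (Dz Y z) (Dz Y z) = 0 \<and> lip (Dz Y z) (Dzb Y z) = 1/2)"

definition inV :: "(complex \<Rightarrow> complex^5) \<Rightarrow> complex \<Rightarrow> complex^5 \<Rightarrow> bool" where
  "inV Y z w \<longleftrightarrow> (\<exists>a b c d. w = a *s Y z + b *s Dz Y z + c *s Dzb Y z + d *s Dzb (Dz Y) z)"

definition Vperp :: "(complex \<Rightarrow> complex^5) \<Rightarrow> complex \<Rightarrow> (complex^5) set" where
  "Vperp Y z = {w. realv w \<and> lip w (Y z) = 0 \<and> lip w (Dz Y z) = 0 \<and>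
                  lip w (Dzb Y z) = 0 \<and> lip w (Dzb (Dz Y) z) = 0}"

definition conormal :: "(complex \<Rightarrow> complex^5) \<Rightarrow> complex \<Rightarrow> complex^5" where
  "conormal Y z = (THE N. realv N \<and> inV Y z N \<and> lip N N = 0 \<and> lip N (Dz Y z) = 0 \<and> lip (Y z) N = -1)"

definition schwarzian :: "(complex \<Rightarrow> complex^5) \<Rightarrow> complex \<Rightarrow> complex" where
  "schwarzian Y z = 2 * lip (Dz (Dz Y) z) (conormal Y z)"

definition hopf :: "(complex \<Rightarrow> complex^5) \<Rightarrow> complex \<Rightarrow> complex^5" where
  "hopf Y z = Dz (Dz Y) z + (schwarzian Y z / 2) *s Y z"

text \<open>xi_1 = <f_zz,N_1>, xi_2 = -<f_zz,N_2>, and H defined by f_zzbar = -e^{2u} f + e^{2u} H.\<close>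
definition xi1 :: "(complex \<Rightarrow> complex^5) \<Rightarrow> (complex \<Rightarrow> complex^5) \<Rightarrow> complex \<Rightarrow> complex" where
  "xi1 f N1 z = lip (Dz (Dz f) z) (N1 z)"

definition xi2 :: "(complex \<Rightarrow> complex^5) \<Rightarrow> (complex \<Rightarrow> complex^5) \<Rightarrow> complex \<Rightarrow> complex" where
  "xi2 f N2 z = - lip (Dz (Dz f) z) (N2 z)"

definition meanH :: "(complex \<Rightarrow> complex^5) \<Rightarrow> (complex \<Rightarrow> real) \<Rightarrow> complex \<Rightarrow> complex^5" where
  "meanH f u z = (1 / exp (2 * complex_of_real (u z))) *s Dzb (Dz f) z + f z"

end

theory Submission
  imports Defs
begin

text \<open>
Write \<open>\<nu> = N\<^sub>1 + N\<^sub>2\<close>. Because the mean curvature vector is a multiple of the null vector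
\<open>\<nu>\<close>, expanding \<open>\<nu>\<^sub>z\<close> in the frame \<open>f, f\<^sub>z, f\<^sub>z\<^sub>b, N\<^sub>1, N\<^sub>2\<close> gives
\<open>\<nu>\<^sub>z = -(\<xi>\<^sub>1 - \<xi>\<^sub>2) e\<^sup>-\<^sup>2\<^sup>u f\<^sub>z\<^sub>b + \<omega> \<nu>\<close>. Hence for every real function \<open>\<lambda>\<close> the derivative
\<open>(\<lambda>\<nu>)\<^sub>z\<close> is null and \<open>\<langle>(\<lambda>\<nu>)\<^sub>z, (\<lambda>\<nu>)\<^sub>z\<^sub>b\<rangle> = \<lambda>\<^sup>2 |\<xi>\<^sub>1 - \<xi>\<^sub>2|\<^sup>2 e\<^sup>-\<^sup>2\<^sup>u\<close>; this equals \<open>1/2\<close>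
exactly for the stated scale, and being future pointing fixes its sign.

The vectors \<open>Y, Y\<^sub>z, Y\<^sub>z\<^sub>b, Y\<^sub>z\<^sub>z\<^sub>b\<close> have a nondegenerate Gram matrix and are orthogonal to
\<open>f\<close>, so together with \<open>f\<close> they form a basis; this gives \<open>V\<^sup>\<bottom> = \<real> f\<close>, identifies the conormal
\<open>N = 2\<langle>Y\<^sub>z\<^sub>z\<^sub>b, Y\<^sub>z\<^sub>z\<^sub>b\<rangle> Y + 2 Y\<^sub>z\<^sub>z\<^sub>b\<close>, and shows that the Hopf differential, which is orthogonal
to \<open>V\<close>, equals \<open>\<langle>Y\<^sub>z\<^sub>z, f\<rangle> f = -\<langle>Y\<^sub>z, f\<^sub>z\<rangle> f = \<lambda>(\<xi>\<^sub>1 - \<xi>\<^sub>2) f\<close>. Finally, the Codazzi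
equation \<open>(\<xi>\<^sub>1 - \<xi>\<^sub>2)\<^sub>z\<^sub>b = \<omega>\<^sup>* (\<xi>\<^sub>1 - \<xi>\<^sub>2)\<close> lets one differentiate
\<open>\<lambda>(\<xi>\<^sub>1 - \<xi>\<^sub>2) = e\<^sup>u\<^sup>+\<^sup>i\<^sup>\<theta>/\<surd>2\<close> in \<open>z\<^sub>b\<close> and solve for \<open>f\<^sub>z\<close>.
\<close>

section \<open>Directional derivatives\<close>

definition dirderiv :: "complex \<Rightarrow> (complex \<Rightarrow> 'a::real_normed_vector) \<Rightarrow> complex \<Rightarrow> 'a" where
  "dirderiv v F z = vector_derivative (\<lambda>t. F (z + v * complex_of_real t)) (at 0)"

lemma dx_eq_dirderiv: "dx F = dirderiv 1 F"
  and dy_eq_dirderiv: "dy F = dirderiv \<i> F"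
  by (auto simp: dx_def dy_def dirderiv_def fun_eq_iff)

lemma Dz_eq_dirderiv: "Dz F z = (1/2) *s (dirderiv 1 F z - \<i> *s dirderiv \<i> F z)"
  and Dzb_eq_dirderiv: "Dzb F z = (1/2) *s (dirderiv 1 F z + \<i> *s dirderiv \<i> F z)"
  and dzc_eq_dirderiv: "dzc g z = (dirderiv 1 g z - \<i> * dirderiv \<i> g z) / 2"
  and dzbc_eq_dirderiv: "dzbc g z = (dirderiv 1 g z + \<i> * dirderiv \<i> g z) / 2"
  by (simp_all add: Dz_def Dzb_def dzc_def dzbc_def dx_eq_dirderiv dy_eq_dirderiv)

lemma has_vector_derivative_line:
  assumes "(F has_derivative F') (at (c + v * complex_of_real s))"
  shows "((\<lambda>t. F (c + v * complex_of_real t)) has_vector_derivative F' v) (at s)"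
proof -
  have "((\<lambda>t. c + v * complex_of_real t) has_derivative (\<lambda>t. v * complex_of_real t)) (at s)"
    by (auto intro!: derivative_eq_intros)
  from has_derivative_compose[OF this assms]
  have "((\<lambda>t. F (c + v * complex_of_real t)) has_derivative (\<lambda>t. F' (v * complex_of_real t))) (at s)"
    by (simp add: o_def)
  moreover have "F' (v * complex_of_real t) = t *\<^sub>R F' v" for t
    using linear_scale[OF has_derivative_linear[OF assms], of t v]
    by (simp add: scaleR_conv_of_real mult.commute)
  ultimately show ?thesis
    by (simp add: has_vector_derivative_def)
qed

lemma dirderiv_eq:
  assumes "(F has_derivative F') (at z)"
  shows "dirderiv v F z = F' v"
  unfolding dirderiv_def
  by (rule vector_derivative_at, rule has_vector_derivative_line) (use assms in simp)

lemma has_vector_derivative_dirderiv_line: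
  assumes "F differentiable (at (c + v * complex_of_real s))"
  shows "((\<lambda>t. F (c + v * complex_of_real t)) has_vector_derivative
           dirderiv v F (c + v * complex_of_real s)) (at s)"
  using assms has_vector_derivative_line dirderiv_eq unfolding differentiable_def by metis

lemma dirderiv_cong:
  assumes "open U" "z \<in> U" "\<And>w. w \<in> U \<Longrightarrow> F w = G w"
  shows "dirderiv v F z = dirderiv v G z"
proof -
  have "open ((\<lambda>t::real. z + v * complex_of_real t) -` U)"
    by (intro open_vimage assms(1) continuous_intros)
  then have "eventually (\<lambda>t. z + v * complex_of_real t \<in> U) (nhds 0)"
    using eventually_nhds_in_open assms(2) by fastforce
  then show ?thesis
    unfolding dirderiv_def
    by (intro vector_derivative_cong_eq) (auto elim!: eventually_mono simp: assms(3))
qed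

lemma differentiable_cong_open:
  assumes "open U" "z \<in> U" "\<And>w. w \<in> U \<Longrightarrow> F w = G w" "G differentiable (at z)"
  shows "F differentiable (at z)"
  using assms has_derivative_transform_within_open[of G _ z UNIV U F]
  unfolding differentiable_def by metis

lemma dirderiv_linear:
  assumes "bounded_linear L" "F differentiable (at z)"
  shows "dirderiv v (\<lambda>w. L (F w)) z = L (dirderiv v F z)"
  using assms bounded_linear.has_derivative dirderiv_eq unfolding differentiable_def by metis

lemma differentiable_linear:
  assumes "bounded_linear L" "F differentiable (at z)"
  shows "(\<lambda>w. L (F w)) differentiable (at z)"
  using assms bounded_linear.has_derivative unfolding differentiable_def by blast

lemma dirderiv_add:
  assumes "F differentiable (at z)" "G differentiable (at z)"
  shows "dirderiv v (\<lambda>w. F w + G w) z = dirderiv v F z + dirderiv v G z"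
  using assms has_derivative_add dirderiv_eq unfolding differentiable_def by metis

lemma dirderiv_mult:
  fixes a b :: "complex \<Rightarrow> complex"
  assumes "a differentiable (at z)" "b differentiable (at z)"
  shows "dirderiv v (\<lambda>w. a w * b w) z = dirderiv v a z * b z + a z * dirderiv v b z"
proof -
  obtain A' B' where A: "(a has_derivative A') (at z)" and B: "(b has_derivative B') (at z)"
    using assms unfolding differentiable_def by blast
  show ?thesis
    using dirderiv_eq[OF has_derivative_mult[OF A B]] dirderiv_eq[OF A] dirderiv_eq[OF B]
    by (simp add: algebra_simps)
qed

lemma has_derivative_vec:
  fixes F :: "complex \<Rightarrow> 'a::real_normed_vector^'n"
  assumes "\<And>i. ((\<lambda>w. F w $ i) has_derivative F' i) (at z)"
  shows "(F has_derivative (\<lambda>h. \<chi> i. F' i h)) (at z)"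
proof -
  have "linear (F' i)" for i
    using assms has_derivative_linear by blast
  then have "linear (\<lambda>h. \<chi> i. F' i h)"
    unfolding linear_iff vec_eq_iff by simp
  then have bl: "bounded_linear (\<lambda>h. \<chi> i. F' i h)"
    using linear_conv_bounded_linear by blast
  have "((\<lambda>y. \<chi> i. ((F y $ i - F z $ i) - F' i (y - z)) /\<^sub>R norm (y - z)) \<longlongrightarrow> (\<chi> i. 0)) (at z)"
    using assms unfolding has_derivative_at_within by (intro tendsto_vec_lambda) simp
  moreover have "(\<lambda>y. ((F y - F z) - (\<chi> i. F' i (y - z))) /\<^sub>R norm (y - z)) =
       (\<lambda>y. \<chi> i. ((F y $ i - F z $ i) - F' i (y - z)) /\<^sub>R norm (y - z))"
    by (auto simp: vec_eq_iff)
  ultimately show ?thesis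
    using bl unfolding has_derivative_at_within by (simp add: zero_vec_def)
qed

lemma differentiable_vec:
  fixes F :: "complex \<Rightarrow> 'a::real_normed_vector^'n"
  assumes "\<And>i. (\<lambda>w. F w $ i) differentiable (at z)"
  shows "F differentiable (at z)"
  using assms has_derivative_vec unfolding differentiable_def by metis

lemma has_derivative_lip:
  assumes A: "(A has_derivative A') (at z)" and B: "(B has_derivative B') (at z)"
  shows "((\<lambda>w. lip (A w) (B w)) has_derivative (\<lambda>h. lip (A' h) (B z) + lip (A z) (B' h))) (at z)"
proof -
  have m: "((\<lambda>w. A w $ i * B w $ i) has_derivative (\<lambda>h. A z $ i * B' h $ i + A' h $ i * B z $ i)) (at z)" for i
    by (intro has_derivative_mult bounded_linear.has_derivative[OF bounded_linear_vec_nth] A B)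
  have "((\<lambda>w. A w $ 0 * B w $ 0 + A w $ 1 * B w $ 1 + A w $ 2 * B w $ 2 + A w $ 3 * B w $ 3 - A w $ 4 * B w $ 4)
     has_derivative (\<lambda>h. (A z $ 0 * B' h $ 0 + A' h $ 0 * B z $ 0) + (A z $ 1 * B' h $ 1 + A' h $ 1 * B z $ 1)
       + (A z $ 2 * B' h $ 2 + A' h $ 2 * B z $ 2) + (A z $ 3 * B' h $ 3 + A' h $ 3 * B z $ 3)
       - (A z $ 4 * B' h $ 4 + A' h $ 4 * B z $ 4))) (at z)"
    by (intro has_derivative_add has_derivative_diff m)
  then show ?thesis
    unfolding lip_def by (rule has_derivative_eq_rhs) (simp add: fun_eq_iff algebra_simps)
qed

lemma has_derivative_scale:
  fixes a :: "complex \<Rightarrow> complex" and G :: "complex \<Rightarrow> complex^'n"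
  assumes A: "(a has_derivative A') (at z)" and B: "(G has_derivative G') (at z)"
  shows "((\<lambda>w. a w *s G w) has_derivative (\<lambda>h. A' h *s G z + a z *s G' h)) (at z)"
proof -
  have "((\<lambda>w. (a w *s G w) $ i) has_derivative (\<lambda>h. a z * G' h $ i + A' h * G z $ i)) (at z)" for i
    using has_derivative_mult[OF A bounded_linear.has_derivative[OF bounded_linear_vec_nth B]]
    by simp
  from has_derivative_vec[OF this] show ?thesis
    by (rule has_derivative_eq_rhs) (simp add: fun_eq_iff vec_eq_iff algebra_simps)
qed

lemma dirderiv_lip:
  assumes "A differentiable (at z)" "B differentiable (at z)"
  shows "dirderiv v (\<lambda>w. lip (A w) (B w)) z = lip (dirderiv v A z) (B z) + lip (A z) (dirderiv v B z)"
proof -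
  obtain A' B' where A: "(A has_derivative A') (at z)" and B: "(B has_derivative B') (at z)"
    using assms unfolding differentiable_def by blast
  show ?thesis
    using dirderiv_eq[OF has_derivative_lip[OF A B]] dirderiv_eq[OF A] dirderiv_eq[OF B] by simp
qed

lemma dirderiv_scale:
  fixes a :: "complex \<Rightarrow> complex" and G :: "complex \<Rightarrow> complex^'n"
  assumes "a differentiable (at z)" "G differentiable (at z)"
  shows "dirderiv v (\<lambda>w. a w *s G w) z = dirderiv v a z *s G z + a z *s dirderiv v G z"
proof -
  obtain A' G' where A: "(a has_derivative A') (at z)" and G: "(G has_derivative G') (at z)"
    using assms unfolding differentiable_def by blast
  show ?thesis
    using dirderiv_eq[OF has_derivative_scale[OF A G]] dirderiv_eq[OF A] dirderiv_eq[OF G] by simp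
qed

lemma bounded_linear_scaleC_vec: "bounded_linear (\<lambda>x::complex^'n. c *s x)"
proof -
  have "linear (\<lambda>x::complex^'n. c *s x)"
    by (auto simp: linear_iff vec_eq_iff algebra_simps scaleR_conv_of_real)
  then show ?thesis
    using linear_conv_bounded_linear by blast
qed

lemma dirderiv_exp:
  fixes a :: "complex \<Rightarrow> complex"
  assumes "a differentiable (at z)"
  shows "(\<lambda>w. exp (a w)) differentiable (at z)"
    and "dirderiv v (\<lambda>w. exp (a w)) z = exp (a z) * dirderiv v a z"
proof -
  obtain A' where A: "(a has_derivative A') (at z)"
    using assms unfolding differentiable_def by blast
  have "(exp has_derivative (\<lambda>h. exp (a z) * h)) (at (a z))"
    using DERIV_exp[of "a z"] by (simp add: has_field_derivative_def)
  from has_derivative_compose[OF A this]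
  have E: "((\<lambda>w. exp (a w)) has_derivative (\<lambda>h. exp (a z) * A' h)) (at z)"
    by (simp add: o_def)
  show "(\<lambda>w. exp (a w)) differentiable (at z)"
    using E unfolding differentiable_def by blast
  show "dirderiv v (\<lambda>w. exp (a w)) z = exp (a z) * dirderiv v a z"
    using dirderiv_eq[OF E] dirderiv_eq[OF A] by simp
qed

lemma dirderiv_Re_powr:
  fixes a :: "complex \<Rightarrow> complex"
  assumes "a differentiable (at z)" and pos: "Re (a z) > 0"
  shows "(\<lambda>w. complex_of_real (Re (a w) powr r)) differentiable (at z)"
    and "dirderiv v (\<lambda>w. complex_of_real (Re (a w) powr r)) z =
           complex_of_real (r * Re (a z) powr (r - 1) * Re (dirderiv v a z))"
proof -
  obtain A' where A: "(a has_derivative A') (at z)"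
    using assms unfolding differentiable_def by blast
  have "((\<lambda>x. x powr r) has_derivative (\<lambda>h. r * Re (a z) powr (r - 1) * h)) (at (Re (a z)))"
    using has_real_derivative_powr[OF pos, of r] by (simp add: has_field_derivative_def)
  from has_derivative_compose[OF bounded_linear.has_derivative[OF bounded_linear_Re A] this]
  have "((\<lambda>w. Re (a w) powr r) has_derivative (\<lambda>h. r * Re (a z) powr (r - 1) * Re (A' h))) (at z)"
    by (simp add: o_def)
  from bounded_linear.has_derivative[OF bounded_linear_of_real this]
  have P: "((\<lambda>w. complex_of_real (Re (a w) powr r)) has_derivative
             (\<lambda>h. complex_of_real (r * Re (a z) powr (r - 1) * Re (A' h)))) (at z)" .
  show "(\<lambda>w. complex_of_real (Re (a w) powr r)) differentiable (at z)"
    using P unfolding differentiable_def by blast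
  show "dirderiv v (\<lambda>w. complex_of_real (Re (a w) powr r)) z =
          complex_of_real (r * Re (a z) powr (r - 1) * Re (dirderiv v a z))"
    using dirderiv_eq[OF P] dirderiv_eq[OF A] by simp
qed


section \<open>Smooth maps\<close>

lemma smooth_on_dirderiv:
  assumes "smooth_on U F" "v = 1 \<or> v = \<i>"
  shows "smooth_on U (dirderiv v F)"
  using assms smooth_on.simps[of U F] unfolding dx_eq_dirderiv dy_eq_dirderiv by auto

lemma smooth_on_imp_differentiable:
  assumes "open U" "smooth_on U F" "z \<in> U"
  shows "F differentiable (at z)"
  using assms smooth_on.simps[of U F] at_within_open[OF assms(3,1)]
  unfolding differentiable_on_def by auto

text \<open>Unlike \<open>smooth_on.coinduct\<close>, the partial derivatives need only agree on \<open>U\<close> with a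
  member of the invariant.\<close>

lemma smooth_on_coinduct_open:
  assumes U: "open U" and "X F"
    and diff: "\<And>G z. X G \<Longrightarrow> z \<in> U \<Longrightarrow> G differentiable (at z)"
    and deriv: "\<And>G v. X G \<Longrightarrow> v = 1 \<or> v = \<i> \<Longrightarrow> \<exists>H. X H \<and> (\<forall>z\<in>U. dirderiv v G z = H z)"
  shows "smooth_on U F"
proof -
  define X' where "X' V G \<longleftrightarrow> V = U \<and> (\<exists>H. X H \<and> (\<forall>z\<in>U. G z = H z))" for V G
  have "X' U F"
    unfolding X'_def using \<open>X F\<close> by auto
  then show ?thesis
  proof (rule smooth_on.coinduct[of X'])
    fix V G assume "X' V G"
    then obtain H where V: "V = U" and XH: "X H" and GH: "\<forall>z\<in>U. G z = H z"
      unfolding X'_def by auto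
    have "G differentiable (at z within U)" if "z \<in> U" for z
      using differentiable_cong_open[OF U that, of G H] diff[OF XH that] GH
      by (simp add: differentiable_at_withinI)
    moreover have "X' V (dirderiv v G)" if v: "v = 1 \<or> v = \<i>" for v
    proof -
      obtain H' where "X H'" "\<forall>z\<in>U. dirderiv v H z = H' z"
        using deriv[OF XH v] by blast
      then show ?thesis
        unfolding X'_def V using dirderiv_cong[OF U, of _ G H] GH by metis
    qed
    ultimately show "\<exists>F U. V = U \<and> G = F \<and> F differentiable_on U \<and>
        (X' U (dx F) \<or> smooth_on U (dx F)) \<and> (X' U (dy F) \<or> smooth_on U (dy F))"
      using V unfolding differentiable_on_def dx_eq_dirderiv dy_eq_dirderiv by auto
  qed
qed

lemma smooth_on_cong:
  assumes U: "open U" and "smooth_on U G" and "\<And>z. z \<in> U \<Longrightarrow> F z = G z"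
  shows "smooth_on U F"
proof (rule smooth_on_coinduct_open[OF U, where X="\<lambda>H. \<exists>G. smooth_on U G \<and> (\<forall>z\<in>U. H z = G z)"])
  fix H z assume "\<exists>G. smooth_on U G \<and> (\<forall>z\<in>U. H z = G z)" "z \<in> U"
  then show "H differentiable (at z)"
    using differentiable_cong_open[OF U] smooth_on_imp_differentiable[OF U] by metis
next
  fix H v assume "\<exists>G. smooth_on U G \<and> (\<forall>z\<in>U. H z = G z)" "v = 1 \<or> v = \<i>"
  then show "\<exists>H'. (\<exists>G. smooth_on U G \<and> (\<forall>z\<in>U. H' z = G z)) \<and> (\<forall>z\<in>U. dirderiv v H z = H' z)"
    using dirderiv_cong[OF U] smooth_on_dirderiv by metis
qed (use assms in auto)

lemma smooth_on_linear:
  assumes U: "open U" and L: "bounded_linear L" and "smooth_on U F"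
  shows "smooth_on U (\<lambda>z. L (F z))"
proof (rule smooth_on_coinduct_open[OF U, where X="\<lambda>H. \<exists>G. smooth_on U G \<and> H = (\<lambda>z. L (G z))"])
  fix H z assume "\<exists>G. smooth_on U G \<and> H = (\<lambda>z. L (G z))" "z \<in> U"
  then show "H differentiable (at z)"
    using differentiable_linear[OF L] smooth_on_imp_differentiable[OF U] by blast
next
  fix H v assume H: "\<exists>G. smooth_on U G \<and> H = (\<lambda>z. L (G z))" and v: "v = 1 \<or> v = \<i>"
  then obtain G where G: "smooth_on U G" "H = (\<lambda>z. L (G z))" by blast
  have "\<forall>z\<in>U. dirderiv v H z = L (dirderiv v G z)"
    using dirderiv_linear[OF L] smooth_on_imp_differentiable[OF U G(1)] G(2) by blast
  then show "\<exists>H'. (\<exists>G. smooth_on U G \<and> H' = (\<lambda>z. L (G z))) \<and> (\<forall>z\<in>U. dirderiv v H z = H' z)"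
    using smooth_on_dirderiv[OF G(1) v] by blast
qed (use assms in auto)

lemma smooth_on_add:
  assumes U: "open U" and "smooth_on U F" "smooth_on U G"
  shows "smooth_on U (\<lambda>z. F z + G z)"
proof (rule smooth_on_coinduct_open[OF U,
      where X="\<lambda>H. \<exists>F G. smooth_on U F \<and> smooth_on U G \<and> H = (\<lambda>z. F z + G z)"])
  fix H z assume "\<exists>F G. smooth_on U F \<and> smooth_on U G \<and> H = (\<lambda>z. F z + G z)" "z \<in> U"
  then show "H differentiable (at z)"
    using smooth_on_imp_differentiable[OF U] differentiable_add by blast
next
  fix H v assume "\<exists>F G. smooth_on U F \<and> smooth_on U G \<and> H = (\<lambda>z. F z + G z)" and v: "v = 1 \<or> v = \<i>"
  then obtain F G where FG: "smooth_on U F" "smooth_on U G" "H = (\<lambda>z. F z + G z)" by blast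
  have "\<forall>z\<in>U. dirderiv v H z = dirderiv v F z + dirderiv v G z"
    using dirderiv_add smooth_on_imp_differentiable[OF U] FG by blast
  then show "\<exists>H'. (\<exists>F G. smooth_on U F \<and> smooth_on U G \<and> H' = (\<lambda>z. F z + G z)) \<and>
      (\<forall>z\<in>U. dirderiv v H z = H' z)"
    using smooth_on_dirderiv[OF _ v] FG by blast
qed (use assms in auto)

lemma smooth_on_const: "open U \<Longrightarrow> smooth_on U (\<lambda>z. c)"
proof (rule smooth_on_coinduct_open[where X="\<lambda>H. \<exists>c. H = (\<lambda>z. c)"])
  fix H :: "complex \<Rightarrow> 'a" and v assume "\<exists>c. H = (\<lambda>z. c)"
  then show "\<exists>H'. (\<exists>c. H' = (\<lambda>z. c)) \<and> (\<forall>z\<in>U. dirderiv v H z = H' z)"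
    using dirderiv_eq[of H "\<lambda>_. 0" _ v] by auto
qed auto

lemma smooth_on_component:
  assumes "open U" "smooth_on U F"
  shows "smooth_on U (\<lambda>z. F z $ i)"
  using smooth_on_linear[OF assms(1) bounded_linear_vec_nth assms(2)] .

lemma smooth_on_vec:
  fixes F :: "complex \<Rightarrow> 'a::real_normed_vector^'n"
  assumes U: "open U" and "\<And>i. smooth_on U (\<lambda>z. F z $ i)"
  shows "smooth_on U F"
proof (rule smooth_on_coinduct_open[OF U, where X="\<lambda>H. \<forall>i. smooth_on U (\<lambda>z. H z $ i)"])
  fix H :: "complex \<Rightarrow> 'a^'n" and z assume "\<forall>i. smooth_on U (\<lambda>z. H z $ i)" "z \<in> U"
  then show "H differentiable (at z)"
    using differentiable_vec smooth_on_imp_differentiable[OF U] by metis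
next
  fix H :: "complex \<Rightarrow> 'a^'n" and v assume H: "\<forall>i. smooth_on U (\<lambda>z. H z $ i)" and v: "v = 1 \<or> v = \<i>"
  have "dirderiv v H z = (\<chi> i. dirderiv v (\<lambda>w. H w $ i) z)" if "z \<in> U" for z
  proof -
    have "H differentiable (at z)"
      using differentiable_vec smooth_on_imp_differentiable[OF U] H that by metis
    from dirderiv_linear[OF bounded_linear_vec_nth this] show ?thesis
      by (simp add: vec_eq_iff)
  qed
  then show "\<exists>H'. (\<forall>i. smooth_on U (\<lambda>z. H' z $ i)) \<and> (\<forall>z\<in>U. dirderiv v H z = H' z)"
    using smooth_on_dirderiv[OF _ v] H by (intro exI[of _ "\<lambda>z. \<chi> i. dirderiv v (\<lambda>w. H w $ i) z"]) auto
qed (use assms in auto)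

text \<open>Smoothness of products, exponentials and powers cannot be shown by a coinduction whose
  invariant is the class of such functions itself, since their derivatives leave it; the
  invariant is the algebra generated by smooth functions under these operations.\<close>

inductive smooth_closure :: "complex set \<Rightarrow> (complex \<Rightarrow> complex) \<Rightarrow> bool" for U where
  smooth: "smooth_on U g \<Longrightarrow> smooth_closure U g"
| add: "smooth_closure U a \<Longrightarrow> smooth_closure U b \<Longrightarrow> smooth_closure U (\<lambda>z. a z + b z)"
| mult: "smooth_closure U a \<Longrightarrow> smooth_closure U b \<Longrightarrow> smooth_closure U (\<lambda>z. a z * b z)"
| cnj: "smooth_closure U a \<Longrightarrow> smooth_closure U (\<lambda>z. cnj (a z))"
| exp: "smooth_closure U a \<Longrightarrow> smooth_closure U (\<lambda>z. exp (a z))"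
| Re_powr: "smooth_closure U a \<Longrightarrow> \<forall>z\<in>U. Re (a z) > 0 \<Longrightarrow>
    smooth_closure U (\<lambda>z. complex_of_real (Re (a z) powr r))"

lemma smooth_closure_differentiable:
  assumes U: "open U"
  shows "smooth_closure U g \<Longrightarrow> z \<in> U \<Longrightarrow> g differentiable (at z)"
  by (induction arbitrary: z rule: smooth_closure.induct)
    (auto simp: smooth_on_imp_differentiable[OF U] differentiable_linear[OF bounded_linear_cnj]
      dirderiv_exp(1) dirderiv_Re_powr(1))

lemma smooth_closure_dirderiv:
  assumes U: "open U" and v: "v = 1 \<or> v = \<i>"
  shows "smooth_closure U g \<Longrightarrow> \<exists>h. smooth_closure U h \<and> (\<forall>z\<in>U. dirderiv v g z = h z)"
proof (induction rule: smooth_closure.induct)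
  case (smooth g)
  then show ?case
    using smooth_on_dirderiv[OF _ v] smooth_closure.smooth by blast
next
  case (add a b)
  then obtain ha hb where "smooth_closure U ha" "smooth_closure U hb"
    "\<forall>z\<in>U. dirderiv v a z = ha z" "\<forall>z\<in>U. dirderiv v b z = hb z"
    by blast
  with add.hyps show ?case
    by (intro exI[of _ "\<lambda>z. ha z + hb z"] conjI smooth_closure.add)
      (simp_all add: dirderiv_add smooth_closure_differentiable[OF U])
next
  case (mult a b)
  then obtain ha hb where "smooth_closure U ha" "smooth_closure U hb"
    "\<forall>z\<in>U. dirderiv v a z = ha z" "\<forall>z\<in>U. dirderiv v b z = hb z"
    by blast
  with mult.hyps show ?case
    by (intro exI[of _ "\<lambda>z. ha z * b z + a z * hb z"] conjI smooth_closure.add smooth_closure.mult)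
      (simp_all add: dirderiv_mult smooth_closure_differentiable[OF U])
next
  case (cnj a)
  then obtain ha where "smooth_closure U ha" "\<forall>z\<in>U. dirderiv v a z = ha z"
    by blast
  with cnj.hyps show ?case
    by (intro exI[of _ "\<lambda>z. cnj (ha z)"] conjI smooth_closure.cnj)
      (simp_all add: dirderiv_linear[OF bounded_linear_cnj] smooth_closure_differentiable[OF U])
next
  case (exp a)
  then obtain ha where "smooth_closure U ha" "\<forall>z\<in>U. dirderiv v a z = ha z"
    by blast
  with exp.hyps show ?case
    by (intro exI[of _ "\<lambda>z. exp (a z) * ha z"] conjI smooth_closure.mult smooth_closure.exp)
      (simp_all add: dirderiv_exp smooth_closure_differentiable[OF U])
next
  case (Re_powr a r)
  then obtain ha where ha: "smooth_closure U ha" "\<forall>z\<in>U. dirderiv v a z = ha z"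
    by blast
  have const: "smooth_closure U (\<lambda>_. complex_of_real c)" for c
    using smooth_on_const[OF U] smooth_closure.smooth by blast
  \<comment> \<open>\<open>Re x = (x + cnj x) / 2\<close> keeps the derivative inside the closure\<close>
  define h where "h z = (complex_of_real r * complex_of_real (Re (a z) powr (r - 1))) *
    (complex_of_real (1/2) * (ha z + cnj (ha z)))" for z
  have "smooth_closure U h"
    unfolding h_def
    by (intro smooth_closure.mult smooth_closure.add smooth_closure.cnj smooth_closure.Re_powr
        Re_powr.hyps ha(1) const)
  moreover have "\<forall>z\<in>U. dirderiv v (\<lambda>z. complex_of_real (Re (a z) powr r)) z = h z"
    using Re_powr.hyps ha(2)
    by (simp add: dirderiv_Re_powr smooth_closure_differentiable[OF U] h_def complex_eq_iff)
  ultimately show ?case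
    by blast
qed

lemma smooth_closure_imp_smooth_on:
  assumes U: "open U" and "smooth_closure U g"
  shows "smooth_on U g"
  by (rule smooth_on_coinduct_open[OF U, where X="smooth_closure U"])
    (use assms smooth_closure_differentiable[OF U] smooth_closure_dirderiv[OF U] in blast)+

lemma smooth_on_mult:
  fixes a b :: "complex \<Rightarrow> complex"
  assumes "open U" "smooth_on U a" "smooth_on U b"
  shows "smooth_on U (\<lambda>z. a z * b z)"
  using assms smooth_closure.mult[OF smooth_closure.smooth smooth_closure.smooth]
  by (blast intro: smooth_closure_imp_smooth_on)

lemma smooth_on_exp:
  fixes a :: "complex \<Rightarrow> complex"
  assumes "open U" "smooth_on U a"
  shows "smooth_on U (\<lambda>z. exp (a z))"
  using assms smooth_closure.exp[OF smooth_closure.smooth]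
  by (blast intro: smooth_closure_imp_smooth_on)

lemma smooth_on_inverse_norm:
  fixes a :: "complex \<Rightarrow> complex"
  assumes U: "open U" and a: "smooth_on U a" and nz: "\<forall>z\<in>U. a z \<noteq> 0"
  shows "smooth_on U (\<lambda>z. complex_of_real (1 / cmod (a z)))"
proof (rule smooth_on_cong[OF U])
  have Re: "Re (a z * cnj (a z)) = cmod (a z) powr 2" for z
    by (simp add: complex_mult_cnj cmod_power2 powr_numeral)
  have "\<forall>z\<in>U. 0 < Re (a z * cnj (a z))"
    using nz unfolding Re by simp
  then have "smooth_closure U (\<lambda>z. complex_of_real (Re (a z * cnj (a z)) powr (-1/2)))"
    using smooth_closure.mult[OF smooth_closure.smooth[OF a] smooth_closure.cnj[OF smooth_closure.smooth[OF a]]]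
    by (rule smooth_closure.Re_powr[rotated])
  then show "smooth_on U (\<lambda>z. complex_of_real (Re (a z * cnj (a z)) powr (-1/2)))"
    by (rule smooth_closure_imp_smooth_on[OF U])
  fix z assume "z \<in> U"
  then show "complex_of_real (1 / cmod (a z)) = complex_of_real (Re (a z * cnj (a z)) powr (-1/2))"
    using nz unfolding Re by (simp add: powr_powr powr_minus_divide)
qed

lemma smooth_on_of_real:
  fixes u :: "complex \<Rightarrow> real"
  assumes "open U" "smooth_on U u"
  shows "smooth_on U (\<lambda>z. complex_of_real (u z))"
  using smooth_on_linear[OF assms(1) bounded_linear_of_real assms(2)] .

lemma smooth_on_diff:
  assumes "open U" "smooth_on U F" "smooth_on U G"
  shows "smooth_on U (\<lambda>z. F z - G z)"
  using smooth_on_add[OF assms(1,2) smooth_on_linear[OF assms(1) bounded_linear_minus[OF bounded_linear_ident] assms(3)]]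
  by simp

lemma smooth_on_scale:
  fixes a :: "complex \<Rightarrow> complex" and F :: "complex \<Rightarrow> complex^'n"
  assumes U: "open U" and "smooth_on U a" "smooth_on U F"
  shows "smooth_on U (\<lambda>z. a z *s F z)"
  by (rule smooth_on_vec[OF U]) (simp add: smooth_on_mult[OF U assms(2) smooth_on_component[OF U assms(3)]])

lemma smooth_on_lip:
  assumes U: "open U" and "smooth_on U F" "smooth_on U G"
  shows "smooth_on U (\<lambda>z. lip (F z) (G z))"
proof -
  have "smooth_on U (\<lambda>z. F z $ i * G z $ i)" for i
    using smooth_on_mult[OF U smooth_on_component[OF U assms(2)] smooth_on_component[OF U assms(3)]] .
  then show ?thesis
    unfolding lip_def by (intro smooth_on_add[OF U] smooth_on_diff[OF U])
qed

section \<open>Symmetry of second derivatives\<close>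

text \<open>Mean value theorem along the direction \<open>v\<close> for the second difference of \<open>\<phi>\<close> with
  steps \<open>h v\<close> and \<open>h w\<close>, which is symmetric in \<open>v\<close> and \<open>w\<close>.\<close>

lemma second_difference_estimate:
  fixes \<phi> :: "complex \<Rightarrow> real" and h :: real
  assumes v: "norm v \<le> 1" and w: "norm w \<le> 1" and h: "0 < h" "2 * h < d"
    and diff: "\<And>p. norm (p - z) < d \<Longrightarrow> \<phi> differentiable (at p)"
    and lin: "linear A'"
    and approx: "\<And>y. norm (y - z) < d \<Longrightarrow>
      \<bar>dirderiv v \<phi> y - dirderiv v \<phi> z - A' (y - z)\<bar> \<le> e * norm (y - z)"
    and e: "0 \<le> e"
  shows "\<bar>\<phi> (z + of_real h * w + v * of_real h) - \<phi> (z + v * of_real h) - \<phi> (z + of_real h * w) + \<phi> z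
          - h * h * A' w\<bar> \<le> 3 * e * h * h"
proof -
  define a where "a = dirderiv v \<phi>"
  define c where "c = z + of_real h * w"
  define g where "g t = \<phi> (c + v * of_real t) - \<phi> (z + v * of_real t)" for t
  have near: "norm (of_real h * w + v * of_real t) \<le> 2 * h" "norm (v * of_real t) \<le> h"
    if "0 \<le> t" "t \<le> h" for t
  proof -
    have "norm v * t \<le> h" "h * norm w \<le> h"
      using mult_mono[of "norm v" 1 t h] mult_left_mono[OF w, of h] that h v by auto
    moreover have "norm (of_real h * w + v * of_real t) \<le> h * norm w + norm v * t"
      using norm_triangle_ineq[of "of_real h * w" "v * of_real t"] that h by (simp add: norm_mult)
    ultimately show "norm (of_real h * w + v * of_real t) \<le> 2 * h" "norm (v * of_real t) \<le> h"
      using that by (simp_all add: norm_mult)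
  qed
  have deriv: "DERIV g t :> a (c + v * of_real t) - a (z + v * of_real t)" if "0 \<le> t" "t \<le> h" for t
  proof -
    have "\<phi> differentiable (at (c + v * of_real t))" "\<phi> differentiable (at (z + v * of_real t))"
      using diff near[OF that] h unfolding c_def by (auto simp: add.assoc)
    then have "(g has_vector_derivative a (c + v * of_real t) - a (z + v * of_real t)) (at t)"
      unfolding g_def a_def by (intro has_vector_derivative_diff has_vector_derivative_dirderiv_line)
    then show ?thesis
      by (simp add: has_real_derivative_iff_has_vector_derivative)
  qed
  then obtain \<tau> where \<tau>: "0 < \<tau>" "\<tau> < h"
      and mvt: "g h - g 0 = h * (a (c + v * of_real \<tau>) - a (z + v * of_real \<tau>))"
    using MVT2[OF h(1) deriv] by auto
  have A'_diff: "A' (of_real h * w + v * of_real \<tau>) - A' (v * of_real \<tau>) = h * A' w"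
    using linear_add[OF lin] linear_scale[OF lin, of h w] by (simp add: scaleR_conv_of_real)
  have "\<bar>a (z + (of_real h * w + v * of_real \<tau>)) - a z - A' (of_real h * w + v * of_real \<tau>)\<bar> \<le> e * (2 * h)"
    "\<bar>a (z + v * of_real \<tau>) - a z - A' (v * of_real \<tau>)\<bar> \<le> e * h"
    using approx[of "z + (of_real h * w + v * of_real \<tau>)"] approx[of "z + v * of_real \<tau>"]
      near[of \<tau>] \<tau> h e mult_left_mono unfolding a_def by fastforce+
  then have "\<bar>(a (c + v * of_real \<tau>) - a (z + v * of_real \<tau>)) - h * A' w\<bar> \<le> 3 * e * h"
    unfolding c_def using A'_diff by (simp add: add.assoc abs_le_iff)
  then have "\<bar>h * ((a (c + v * of_real \<tau>) - a (z + v * of_real \<tau>)) - h * A' w)\<bar> \<le> h * (3 * e * h)"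
    using h by (simp add: abs_mult)
  then show ?thesis
    using mvt unfolding g_def c_def by (simp add: algebra_simps)
qed

lemma derivative_dirderiv_symmetric:
  fixes \<phi> :: "complex \<Rightarrow> real"
  assumes v: "norm v \<le> 1" and w: "norm w \<le> 1"
    and U: "open U" "z \<in> U" and diff: "\<And>p. p \<in> U \<Longrightarrow> \<phi> differentiable (at p)"
    and A': "(dirderiv v \<phi> has_derivative A') (at z)" and B': "(dirderiv w \<phi> has_derivative B') (at z)"
  shows "A' w = B' v"
proof -
  have bound: "\<bar>A' w - B' v\<bar> \<le> 6 * e" if e: "e > 0" for e
  proof -
    obtain d1 where "d1 > 0" and d1: "\<forall>y. norm (y - z) < d1 \<longrightarrow>
        norm (dirderiv v \<phi> y - dirderiv v \<phi> z - A' (y - z)) \<le> e * norm (y - z)"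
      using A' e unfolding has_derivative_at_alt by blast
    obtain d2 where "d2 > 0" and d2: "\<forall>y. norm (y - z) < d2 \<longrightarrow>
        norm (dirderiv w \<phi> y - dirderiv w \<phi> z - B' (y - z)) \<le> e * norm (y - z)"
      using B' e unfolding has_derivative_at_alt by blast
    obtain r where "r > 0" "ball z r \<subseteq> U"
      using U open_contains_ball by blast
    define d where "d = min (min d1 d2) r"
    define h where "h = d / 4"
    have h: "0 < h" "2 * h < d"
      using \<open>d1 > 0\<close> \<open>d2 > 0\<close> \<open>r > 0\<close> unfolding h_def d_def by auto
    have diff_near: "\<phi> differentiable (at p)" if "norm (p - z) < d" for p
      using that diff \<open>ball z r \<subseteq> U\<close> by (force simp: d_def dist_norm norm_minus_commute)
    define \<Delta> where "\<Delta> = \<phi> (z + of_real h * w + v * of_real h) - \<phi> (z + v * of_real h)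
      - \<phi> (z + of_real h * w) + \<phi> z"
    have "\<bar>\<Delta> - h * h * A' w\<bar> \<le> 3 * e * h * h"
      unfolding \<Delta>_def
      by (rule second_difference_estimate[OF v w h diff_near has_derivative_linear[OF A']])
        (use d1 e in \<open>auto simp: d_def\<close>)
    moreover have "\<Delta> = \<phi> (z + of_real h * v + w * of_real h) - \<phi> (z + w * of_real h)
      - \<phi> (z + of_real h * v) + \<phi> z"
      unfolding \<Delta>_def by (simp add: algebra_simps)
    then have "\<bar>\<Delta> - h * h * B' v\<bar> \<le> 3 * e * h * h"
      by (simp only:, intro second_difference_estimate[OF w v h diff_near has_derivative_linear[OF B']])
        (use d2 e in \<open>auto simp: d_def\<close>)
    moreover have "(\<Delta> - h * h * B' v) - (\<Delta> - h * h * A' w) = (h * h) * (A' w - B' v)"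
      by (simp add: algebra_simps)
    then have "h * h * \<bar>A' w - B' v\<bar> = \<bar>(\<Delta> - h * h * B' v) - (\<Delta> - h * h * A' w)\<bar>"
      using h by (simp only: abs_mult)
    ultimately have "h * h * \<bar>A' w - B' v\<bar> \<le> h * h * (6 * e)"
      using abs_triangle_ineq4[of "\<Delta> - h * h * B' v" "\<Delta> - h * h * A' w"]
      by (simp add: algebra_simps)
    then show ?thesis
      using h by (simp add: mult_le_cancel_left_pos)
  qed
  have "\<bar>A' w - B' v\<bar> \<le> 0 + e" if "e > 0" for e
    using bound[of "e / 6"] that by simp
  then have "\<bar>A' w - B' v\<bar> \<le> 0"
    by (rule field_le_epsilon)
  then show ?thesis
    by simp
qed

lemma dirderiv_commute_real:
  fixes \<phi> :: "complex \<Rightarrow> real"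
  assumes U: "open U" and s: "smooth_on U \<phi>" and z: "z \<in> U"
  shows "dirderiv \<i> (dirderiv 1 \<phi>) z = dirderiv 1 (dirderiv \<i> \<phi>) z"
proof -
  obtain A' where A': "(dirderiv 1 \<phi> has_derivative A') (at z)"
    using smooth_on_imp_differentiable[OF U smooth_on_dirderiv[OF s] z] unfolding differentiable_def by blast
  obtain B' where B': "(dirderiv \<i> \<phi> has_derivative B') (at z)"
    using smooth_on_imp_differentiable[OF U smooth_on_dirderiv[OF s] z] unfolding differentiable_def by blast
  have "A' \<i> = B' 1"
    by (rule derivative_dirderiv_symmetric[OF _ _ U z smooth_on_imp_differentiable[OF U s] A' B']) simp_all
  then show ?thesis
    using dirderiv_eq[OF A'] dirderiv_eq[OF B'] by simp
qed

lemma dirderiv_dirderiv_linear: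
  assumes U: "open U" and L: "bounded_linear L" and F: "smooth_on U F" and z: "z \<in> U"
    and v: "v = 1 \<or> v = \<i>"
  shows "dirderiv w (dirderiv v (\<lambda>x. L (F x))) z = L (dirderiv w (dirderiv v F) z)"
proof -
  have "dirderiv w (dirderiv v (\<lambda>x. L (F x))) z = dirderiv w (\<lambda>y. L (dirderiv v F y)) z"
    using dirderiv_linear[OF L smooth_on_imp_differentiable[OF U F]] by (intro dirderiv_cong[OF U z]) 
  also have "\<dots> = L (dirderiv w (dirderiv v F) z)"
    using dirderiv_linear[OF L smooth_on_imp_differentiable[OF U smooth_on_dirderiv[OF F v] z]] .
  finally show ?thesis .
qed

lemma dirderiv_commute:
  fixes F :: "complex \<Rightarrow> complex^'n"
  assumes U: "open U" and s: "smooth_on U F" and z: "z \<in> U"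
  shows "dirderiv \<i> (dirderiv 1 F) z = dirderiv 1 (dirderiv \<i> F) z"
proof -
  have comm: "L (dirderiv \<i> (dirderiv 1 F) z) = L (dirderiv 1 (dirderiv \<i> F) z)"
    if L: "bounded_linear (L :: complex^'n \<Rightarrow> real)" for L
    using dirderiv_commute_real[OF U smooth_on_linear[OF U L s] z]
      dirderiv_dirderiv_linear[OF U L s z, of 1 \<i>] dirderiv_dirderiv_linear[OF U L s z, of \<i> 1]
    by simp
  have "bounded_linear (\<lambda>x. Re (x $ i))" "bounded_linear (\<lambda>x. Im (x $ i))" for i
    by (intro bounded_linear_compose[OF bounded_linear_Re] bounded_linear_compose[OF bounded_linear_Im]
        bounded_linear_vec_nth)+
  from comm[OF this(1)] comm[OF this(2)]
  have "Re (dirderiv \<i> (dirderiv 1 F) z $ i) = Re (dirderiv 1 (dirderiv \<i> F) z $ i)"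
    "Im (dirderiv \<i> (dirderiv 1 F) z $ i) = Im (dirderiv 1 (dirderiv \<i> F) z $ i)" for i
    by simp_all
  then show ?thesis
    by (simp add: vec_eq_iff complex_eq_iff)
qed

section \<open>The Lorentzian product and complex conjugation\<close>

lemma lip_add_left [simp]: "lip (x + y) z = lip x z + lip y z"
  and lip_add_right [simp]: "lip z (x + y) = lip z x + lip z y"
  and lip_diff_left [simp]: "lip (x - y) z = lip x z - lip y z"
  and lip_diff_right [simp]: "lip z (x - y) = lip z x - lip z y"
  and lip_scale_left [simp]: "lip (a *s x) z = a * lip x z"
  and lip_scale_right [simp]: "lip z (a *s x) = a * lip z x"
  and lip_zero_left [simp]: "lip 0 z = 0"
  and lip_zero_right [simp]: "lip z 0 = 0"
  and lip_minus_left [simp]: "lip (- x) z = - lip x z"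
  and lip_minus_right [simp]: "lip z (- x) = - lip z x"
  by (simp_all add: lip_def algebra_simps)

lemma lip_commute: "lip x y = lip y x"
  by (simp add: lip_def algebra_simps)

definition vcnj :: "complex^5 \<Rightarrow> complex^5" where
  "vcnj v = (\<chi> i. cnj (v $ i))"

lemma vcnj_nth [simp]: "vcnj v $ i = cnj (v $ i)"
  and vcnj_vcnj [simp]: "vcnj (vcnj v) = v"
  and vcnj_add [simp]: "vcnj (x + y) = vcnj x + vcnj y"
  and vcnj_diff [simp]: "vcnj (x - y) = vcnj x - vcnj y"
  and vcnj_scale [simp]: "vcnj (a *s x) = cnj a *s vcnj x"
  by (simp_all add: vcnj_def vec_eq_iff)

lemma lip_vcnj: "lip (vcnj x) (vcnj y) = cnj (lip x y)"
  by (simp add: lip_def)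

lemma realv_iff_vcnj: "realv v \<longleftrightarrow> vcnj v = v"
  by (auto simp: realv_def vec_eq_iff complex_eq_iff)

lemma bounded_linear_vcnj: "bounded_linear vcnj"
proof -
  have "linear vcnj"
    by (auto simp: linear_iff vec_eq_iff)
  then show ?thesis
    using linear_conv_bounded_linear by blast
qed

lemma future_add_unit_timelike:
  assumes "realv a" "realv b" and a: "lip a a = 1" and b: "lip b b = -1" "future b"
    and ab: "lip a b = 0"
  shows "future (a + b)"
proof -
  define x where "x i = Re (a $ i)" for i
  define y where "y i = Re (b $ i)" for i
  have a_eq: "a $ i = of_real (x i)" and b_eq: "b $ i = of_real (y i)" for i
    using assms(1,2) unfolding x_def y_def realv_def by (simp_all add: complex_eq_iff)
  have lip_real: "lip p q = of_real (p' 0 * q' 0 + p' 1 * q' 1 + p' 2 * q' 2 + p' 3 * q' 3 - p' 4 * q' 4)"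
    if "\<And>i. p $ i = of_real (p' i)" "\<And>i. q $ i = of_real (q' i)" for p q p' q'
    unfolding lip_def that by simp
  have xx: "x 0 * x 0 + x 1 * x 1 + x 2 * x 2 + x 3 * x 3 = 1 + x 4 * x 4"
    and yy: "y 0 * y 0 + y 1 * y 1 + y 2 * y 2 + y 3 * y 3 = y 4 * y 4 - 1"
    and xy: "x 0 * y 0 + x 1 * y 1 + x 2 * y 2 + x 3 * y 3 = x 4 * y 4"
  proof -
    have "x 0 * x 0 + x 1 * x 1 + x 2 * x 2 + x 3 * x 3 - x 4 * x 4 = 1"
      using a unfolding lip_real[OF a_eq a_eq] of_real_eq_1_iff .
    moreover have "y 0 * y 0 + y 1 * y 1 + y 2 * y 2 + y 3 * y 3 - y 4 * y 4 = -1"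
      using b(1) unfolding lip_real[OF b_eq b_eq] by (metis of_real_eq_iff of_real_minus of_real_1)
    moreover have "x 0 * y 0 + x 1 * y 1 + x 2 * y 2 + x 3 * y 3 - x 4 * y 4 = 0"
      using ab unfolding lip_real[OF a_eq b_eq] of_real_eq_0_iff .
    ultimately show "x 0 * x 0 + x 1 * x 1 + x 2 * x 2 + x 3 * x 3 = 1 + x 4 * x 4"
      "y 0 * y 0 + y 1 * y 1 + y 2 * y 2 + y 3 * y 3 = y 4 * y 4 - 1"
      "x 0 * y 0 + x 1 * y 1 + x 2 * y 2 + x 3 * y 3 = x 4 * y 4"
      by linarith+
  qed
  have y4: "y 4 > 0"
    using b(2) unfolding future_def lip_def e4_def b_eq by (simp add: axis_def)
  \<comment> \<open>Cauchy--Schwarz for the spatial parts, via Lagrange's identity\<close>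
  have "(x 0 * x 0 + x 1 * x 1 + x 2 * x 2 + x 3 * x 3) * (y 0 * y 0 + y 1 * y 1 + y 2 * y 2 + y 3 * y 3)
      - (x 0 * y 0 + x 1 * y 1 + x 2 * y 2 + x 3 * y 3)\<^sup>2 =
      (x 0 * y 1 - x 1 * y 0)\<^sup>2 + (x 0 * y 2 - x 2 * y 0)\<^sup>2 + (x 0 * y 3 - x 3 * y 0)\<^sup>2
      + (x 1 * y 2 - x 2 * y 1)\<^sup>2 + (x 1 * y 3 - x 3 * y 1)\<^sup>2 + (x 2 * y 3 - x 3 * y 2)\<^sup>2"
    by (simp add: algebra_simps power2_eq_square)
  then have "(x 4 * y 4)\<^sup>2 \<le> (1 + x 4 * x 4) * (y 4 * y 4 - 1)"
    unfolding xx yy xy by (smt (verit) zero_le_power2)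
  then have "\<bar>x 4\<bar>\<^sup>2 < (y 4)\<^sup>2"
    by (simp add: power2_eq_square algebra_simps)
  then have "x 4 + y 4 > 0"
    using y4 power2_less_imp_less[of "\<bar>x 4\<bar>" "y 4"] by linarith
  then show ?thesis
    unfolding future_def lip_def e4_def by (simp add: axis_def a_eq b_eq)
qed

lemma future_scale: "future v \<Longrightarrow> r > 0 \<Longrightarrow> future (complex_of_real r *s v)"
  unfolding future_def by (simp add: mult_pos_neg)

lemma exhaust_5: "(x::5) = 0 \<or> x = 1 \<or> x = 2 \<or> x = 3 \<or> x = 4"
proof (induct x)
  case (of_int z)
  then have "z = 0 \<or> z = 1 \<or> z = 2 \<or> z = 3 \<or> z = 4"
    by fastforce
  then show ?case
    by auto
qed

lemma all_5: "(\<forall>i::5. P i) \<longleftrightarrow> P 0 \<and> P 1 \<and> P 2 \<and> P 3 \<and> P 4"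
  by (metis exhaust_5)

lemma sum_UNIV_5: "(\<Sum>i\<in>(UNIV::5 set). f i) = f 0 + f 1 + f 2 + f 3 + f 4"
proof -
  have U5: "(UNIV::5 set) = {0, 1, 2, 3, 4}"
    using exhaust_5 by auto
  have "(0::5) \<noteq> 1" "(0::5) \<noteq> 2" "(0::5) \<noteq> 3" "(0::5) \<noteq> 4" "(1::5) \<noteq> 2"
    "(1::5) \<noteq> 3" "(1::5) \<noteq> 4" "(2::5) \<noteq> 3" "(2::5) \<noteq> 4" "(3::5) \<noteq> 4"
    by simp_all
  then show ?thesis
    unfolding U5 by (simp add: algebra_simps)
qed

lemma five_independent_span:
  fixes e0 e1 e2 e3 e4 v :: "complex^5"
  assumes indep: "\<And>c0 c1 c2 c3 c4. c0 *s e0 + c1 *s e1 + c2 *s e2 + c3 *s e3 + c4 *s e4 = 0 \<Longrightarrow>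
      c0 = 0 \<and> c1 = 0 \<and> c2 = 0 \<and> c3 = 0 \<and> c4 = 0"
  shows "\<exists>c0 c1 c2 c3 c4. v = c0 *s e0 + c1 *s e1 + c2 *s e2 + c3 *s e3 + c4 *s e4"
proof -
  define M :: "complex^5^5" where "M = (\<chi> j i. if i = 0 then e0 $ j else if i = 1 then e1 $ j
      else if i = 2 then e2 $ j else if i = 3 then e3 $ j else e4 $ j)"
  have M: "M *v c = c $ 0 *s e0 + c $ 1 *s e1 + c $ 2 *s e2 + c $ 3 *s e3 + c $ 4 *s e4" for c
    unfolding matrix_vector_mult_def sum_UNIV_5 M_def by (simp add: vec_eq_iff mult.commute)
  have "inj ((*v) M)"
  proof (rule injI)
    fix c d assume "M *v c = M *v d"
    then have "(c $ 0 - d $ 0) *s e0 + (c $ 1 - d $ 1) *s e1 + (c $ 2 - d $ 2) *s e2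
        + (c $ 3 - d $ 3) *s e3 + (c $ 4 - d $ 4) *s e4 = 0"
      unfolding M by (simp add: vec_eq_iff algebra_simps)
    from indep[OF this] show "c = d"
      by (simp add: vec_eq_iff all_5)
  qed
  then have "surj ((*v) M)"
    by (intro vec.linear_inj_imp_surj) auto
  then obtain c where "v = M *v c"
    by blast
  then show ?thesis
    unfolding M by blast
qed

section \<open>Wirtinger derivatives\<close>

lemma smooth_on_Dz:
  assumes U: "open U" and s: "smooth_on U F"
  shows "smooth_on U (Dz F)" and "smooth_on U (Dzb F)"
proof -
  have d: "smooth_on U (dirderiv 1 F)" "smooth_on U (\<lambda>z. \<i> *s dirderiv \<i> F z)"
    using smooth_on_dirderiv[OF s] smooth_on_linear[OF U bounded_linear_scaleC_vec] by auto
  show "smooth_on U (Dz F)"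
    using smooth_on_linear[OF U bounded_linear_scaleC_vec smooth_on_diff[OF U d]]
    unfolding Dz_eq_dirderiv[abs_def] .
  show "smooth_on U (Dzb F)"
    using smooth_on_linear[OF U bounded_linear_scaleC_vec smooth_on_add[OF U d]]
    unfolding Dzb_eq_dirderiv[abs_def] .
qed

lemma differentiable_Dz:
  assumes "open U" "smooth_on U F" "z \<in> U"
  shows "Dz F differentiable (at z)" and "Dzb F differentiable (at z)"
  using smooth_on_imp_differentiable[OF assms(1) smooth_on_Dz(1)[OF assms(1,2)] assms(3)]
    smooth_on_imp_differentiable[OF assms(1) smooth_on_Dz(2)[OF assms(1,2)] assms(3)] .

lemma Dzb_Dz_commute:
  assumes U: "open U" and s: "smooth_on U F" and z: "z \<in> U"
  shows "Dzb (Dz F) z = Dz (Dzb F) z"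
proof -
  have d: "dirderiv 1 F differentiable (at z)" "dirderiv \<i> F differentiable (at z)"
    using smooth_on_imp_differentiable[OF U smooth_on_dirderiv[OF s] z] by auto
  have lin: "dirderiv w (\<lambda>y. a *s dirderiv 1 F y + b *s dirderiv \<i> F y) z =
      a *s dirderiv w (dirderiv 1 F) z + b *s dirderiv w (dirderiv \<i> F) z" for w a b
    using dirderiv_add[OF differentiable_linear[OF bounded_linear_scaleC_vec d(1)]
        differentiable_linear[OF bounded_linear_scaleC_vec d(2)]]
      dirderiv_linear[OF bounded_linear_scaleC_vec d(1)] dirderiv_linear[OF bounded_linear_scaleC_vec d(2)]
    by simp
  have e: "Dz F = (\<lambda>y. (1/2) *s dirderiv 1 F y + (- \<i>/2) *s dirderiv \<i> F y)"
    "Dzb F = (\<lambda>y. (1/2) *s dirderiv 1 F y + (\<i>/2) *s dirderiv \<i> F y)"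
    by (auto simp: fun_eq_iff Dz_eq_dirderiv Dzb_eq_dirderiv vec_eq_iff algebra_simps)
  have "Dzb (Dz F) z = (1/2) *s (dirderiv 1 (Dz F) z + \<i> *s dirderiv \<i> (Dz F) z)"
    by (rule Dzb_eq_dirderiv)
  also have "\<dots> = (1/2) *s (((1/2) *s dirderiv 1 (dirderiv 1 F) z + (- \<i>/2) *s dirderiv 1 (dirderiv \<i> F) z)
       + \<i> *s ((1/2) *s dirderiv \<i> (dirderiv 1 F) z + (- \<i>/2) *s dirderiv \<i> (dirderiv \<i> F) z))"
    by (simp only: e(1) lin)
  also have "\<dots> = (1/2) *s (((1/2) *s dirderiv 1 (dirderiv 1 F) z + (\<i>/2) *s dirderiv 1 (dirderiv \<i> F) z)
       - \<i> *s ((1/2) *s dirderiv \<i> (dirderiv 1 F) z + (\<i>/2) *s dirderiv \<i> (dirderiv \<i> F) z))"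
    unfolding dirderiv_commute[OF U s z] by (simp add: vec_eq_iff algebra_simps)
  also have "\<dots> = (1/2) *s (dirderiv 1 (Dzb F) z - \<i> *s dirderiv \<i> (Dzb F) z)"
    by (simp only: e(2) lin)
  also have "\<dots> = Dz (Dzb F) z"
    by (rule Dz_eq_dirderiv[symmetric])
  finally show ?thesis .
qed

lemma Dz_cong:
  assumes "open U" "z \<in> U" "\<And>w. w \<in> U \<Longrightarrow> F w = G w"
  shows "Dz F z = Dz G z" and "Dzb F z = Dzb G z"
  using dirderiv_cong[OF assms] unfolding Dz_eq_dirderiv Dzb_eq_dirderiv by simp_all

lemma dzc_cong:
  assumes "open U" "z \<in> U" "\<And>w. w \<in> U \<Longrightarrow> g w = h w"
  shows "dzc g z = dzc h z" and "dzbc g z = dzbc h z"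
  using dirderiv_cong[OF assms] unfolding dzc_eq_dirderiv dzbc_eq_dirderiv by simp_all

lemma dzc_const_on:
  assumes "open U" "z \<in> U" "\<And>w. w \<in> U \<Longrightarrow> g w = c"
  shows "dzc g z = 0" and "dzbc g z = 0"
  using dzc_cong[OF assms] dirderiv_eq[of "\<lambda>_. c" "\<lambda>_. 0" z]
  unfolding dzc_eq_dirderiv dzbc_eq_dirderiv by simp_all

lemma Dz_scale:
  fixes a :: "complex \<Rightarrow> complex"
  assumes "a differentiable (at z)" "G differentiable (at z)"
  shows "Dz (\<lambda>w. a w *s G w) z = dzc a z *s G z + a z *s Dz G z"
    and "Dzb (\<lambda>w. a w *s G w) z = dzbc a z *s G z + a z *s Dzb G z"
  unfolding Dz_eq_dirderiv Dzb_eq_dirderiv dzc_eq_dirderiv dzbc_eq_dirderiv dirderiv_scale[OF assms]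
  by (simp_all add: vec_eq_iff algebra_simps add_divide_distrib diff_divide_distrib)

lemma dzbc_mult:
  fixes a b :: "complex \<Rightarrow> complex"
  assumes "a differentiable (at z)" "b differentiable (at z)"
  shows "dzbc (\<lambda>w. a w * b w) z = dzbc a z * b z + a z * dzbc b z"
  unfolding dzbc_eq_dirderiv dirderiv_mult[OF assms] by (simp add: algebra_simps add_divide_distrib)

lemma dzbc_exp:
  fixes g :: "complex \<Rightarrow> complex"
  assumes "g differentiable (at z)"
  shows "dzbc (\<lambda>w. exp (g w)) z = exp (g z) * dzbc g z"
  unfolding dzbc_eq_dirderiv dirderiv_exp[OF assms] by (simp add: algebra_simps)

lemma dzc_lip:
  assumes "A differentiable (at z)" "B differentiable (at z)"
  shows "dzc (\<lambda>w. lip (A w) (B w)) z = lip (Dz A z) (B z) + lip (A z) (Dz B z)"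
    and "dzbc (\<lambda>w. lip (A w) (B w)) z = lip (Dzb A z) (B z) + lip (A z) (Dzb B z)"
  unfolding dzc_eq_dirderiv dzbc_eq_dirderiv Dz_eq_dirderiv Dzb_eq_dirderiv dirderiv_lip[OF assms]
  by (simp_all add: algebra_simps add_divide_distrib diff_divide_distrib)

lemma lip_const_Dz:
  assumes U: "open U" and z: "z \<in> U" and "A differentiable (at z)" "B differentiable (at z)"
    and c: "\<And>w. w \<in> U \<Longrightarrow> lip (A w) (B w) = c"
  shows "lip (Dz A z) (B z) + lip (A z) (Dz B z) = 0"
    and "lip (Dzb A z) (B z) + lip (A z) (Dzb B z) = 0"
  using dzc_lip[OF assms(3,4)] dzc_const_on[OF U z c] by simp_all

lemma Dz_vcnj:
  assumes "F differentiable (at z)"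
  shows "Dz (\<lambda>w. vcnj (F w)) z = vcnj (Dzb F z)"
  unfolding Dz_eq_dirderiv Dzb_eq_dirderiv dirderiv_linear[OF bounded_linear_vcnj assms]
  by (simp add: vec_eq_iff)

lemma Dzb_real:
  assumes U: "open U" and z: "z \<in> U" and r: "\<forall>w\<in>U. realv (F w)" and d: "F differentiable (at z)"
  shows "Dzb F z = vcnj (Dz F z)"
proof -
  have "Dzb F z = Dzb (\<lambda>w. vcnj (F w)) z"
    by (rule Dz_cong(2)[OF U z]) (use r realv_iff_vcnj in auto)
  also have "\<dots> = vcnj (Dz F z)"
    unfolding Dz_eq_dirderiv Dzb_eq_dirderiv dirderiv_linear[OF bounded_linear_vcnj d]
    by (simp add: vec_eq_iff)
  finally show ?thesis .
qed

lemma dzbc_real: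
  fixes g :: "complex \<Rightarrow> complex"
  assumes U: "open U" and z: "z \<in> U" and r: "\<And>w. w \<in> U \<Longrightarrow> cnj (g w) = g w"
    and d: "g differentiable (at z)"
  shows "dzbc g z = cnj (dzc g z)"
proof -
  have "dzbc g z = dzbc (\<lambda>w. cnj (g w)) z"
    using dzc_cong(2)[OF U z, of g "\<lambda>w. cnj (g w)"] r by metis
  also have "\<dots> = cnj (dzc g z)"
    unfolding dzc_eq_dirderiv dzbc_eq_dirderiv dirderiv_linear[OF bounded_linear_cnj d] by simp
  finally show ?thesis .
qed

section \<open>The null Gauss map of a marginally trapped surface\<close>

locale marginally_trapped_chart =
  fixes U :: "complex set"
    and f N1 N2 :: "complex \<Rightarrow> complex^5"
    and u :: "complex \<Rightarrow> real"
  assumes U_open: "open U"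
    and f_smooth: "smooth_on U f" and u_smooth: "smooth_on U u"
    and N1_smooth: "smooth_on U N1" and N2_smooth: "smooth_on U N2"
    and f_sphere: "\<forall>z\<in>U. realv (f z) \<and> lip (f z) (f z) = 1"
    and f_conf: "\<forall>z\<in>U. lip (Dz f z) (Dz f z) = 0 \<and> lip (Dz f z) (Dzb f z) = exp (2 * complex_of_real (u z))"
    and N_real: "\<forall>z\<in>U. realv (N1 z) \<and> realv (N2 z)"
    and N_normal: "\<forall>z\<in>U. lip (N1 z) (f z) = 0 \<and> lip (N1 z) (Dz f z) = 0 \<and>
                          lip (N2 z) (f z) = 0 \<and> lip (N2 z) (Dz f z) = 0"
    and N_orthonormal: "\<forall>z\<in>U. lip (N1 z) (N1 z) = 1 \<and> lip (N2 z) (N2 z) = -1 \<and> lip (N1 z) (N2 z) = 0"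
    and N2_future: "\<forall>z\<in>U. future (N2 z)"
    and orientation: "\<exists>h :: complex \<Rightarrow> real. \<forall>z\<in>U. meanH f u z = complex_of_real (h z) *s (N1 z + N2 z)"
    and non_isotropic: "\<forall>z\<in>U. (xi1 f N1 z)\<^sup>2 - (xi2 f N2 z)\<^sup>2 \<noteq> 0"
begin

definition "nu z = N1 z + N2 z"
definition "conf z = exp (2 * complex_of_real (u z))"
definition "xi z = lip (Dz (Dz f) z) (nu z)"
definition "lift_scale z = complex_of_real (exp (u z) / (sqrt 2 * cmod (xi z)))"
definition "Y0 z = lift_scale z *s nu z"

text \<open>The coefficient of \<open>\<nu>\<close> in \<open>\<nu>\<^sub>z\<close>: the connection form of the normal bundle.\<close>
definition "omega z = lip (Dz nu z) (N1 z)"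

lemma xi_eq: "xi1 f N1 z - xi2 f N2 z = xi z"
  unfolding xi_def xi1_def xi2_def nu_def by simp

lemma xi_nonzero: "z \<in> U \<Longrightarrow> xi z \<noteq> 0"
  using non_isotropic xi_eq[of z]
  by (auto simp: power2_eq_square square_diff_square_factored)

lemma conf_real: "conf z = complex_of_real (exp (2 * u z))"
  unfolding conf_def by (simp flip: exp_of_real)

lemma conf_nonzero: "conf z \<noteq> 0"
  unfolding conf_def by simp

lemmas differentiable_at = smooth_on_imp_differentiable[OF U_open]

lemma smooth_Dz_f: "smooth_on U (Dz f)" "smooth_on U (Dz (Dz f))" "smooth_on U (Dzb (Dz f))"
  using smooth_on_Dz[OF U_open f_smooth] smooth_on_Dz[OF U_open smooth_on_Dz(1)[OF U_open f_smooth]]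
  by auto

lemma smooth_nu: "smooth_on U nu"
  unfolding nu_def[abs_def] using smooth_on_add[OF U_open N1_smooth N2_smooth] .

lemma smooth_xi: "smooth_on U xi"
  unfolding xi_def[abs_def] using smooth_on_lip[OF U_open smooth_Dz_f(2) smooth_nu] .

lemma smooth_lift_scale: "smooth_on U lift_scale"
proof -
  have "lift_scale = (\<lambda>z. exp (complex_of_real (u z)) * complex_of_real (1 / sqrt 2)
      * complex_of_real (1 / cmod (xi z)))"
    unfolding lift_scale_def by (simp add: fun_eq_iff flip: exp_of_real)
  then show ?thesis
    using xi_nonzero
    by (simp only:, intro smooth_on_mult[OF U_open] smooth_on_exp[OF U_open] smooth_on_of_real[OF U_open]
        u_smooth smooth_on_const[OF U_open] smooth_on_inverse_norm[OF U_open] smooth_xi) auto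
qed

lemma smooth_Y0: "smooth_on U Y0"
  unfolding Y0_def[abs_def] using smooth_on_scale[OF U_open smooth_lift_scale smooth_nu] .

lemma realv_frame:
  assumes "z \<in> U"
  shows "vcnj (f z) = f z" "vcnj (N1 z) = N1 z" "vcnj (N2 z) = N2 z" "vcnj (nu z) = nu z"
  using f_sphere N_real assms unfolding nu_def realv_iff_vcnj by auto

lemma Dzb_f: "z \<in> U \<Longrightarrow> Dzb f z = vcnj (Dz f z)"
  using Dzb_real[OF U_open _ _ differentiable_at[OF f_smooth]] f_sphere by auto

lemma frame_lip:
  assumes z: "z \<in> U"
  shows "lip (f z) (f z) = 1" "lip (f z) (Dz f z) = 0" "lip (f z) (Dzb f z) = 0"
    "lip (Dz f z) (Dz f z) = 0" "lip (Dz f z) (Dzb f z) = conf z" "lip (Dzb f z) (Dzb f z) = 0"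
    "lip (N1 z) (f z) = 0" "lip (N1 z) (Dz f z) = 0" "lip (N1 z) (Dzb f z) = 0"
    "lip (N2 z) (f z) = 0" "lip (N2 z) (Dz f z) = 0" "lip (N2 z) (Dzb f z) = 0"
    "lip (N1 z) (N1 z) = 1" "lip (N2 z) (N2 z) = -1" "lip (N1 z) (N2 z) = 0"
proof -
  show "lip (f z) (f z) = 1"
    using f_sphere z by auto
  have "lip (Dz f z) (f z) + lip (f z) (Dz f z) = 0" "lip (Dzb f z) (f z) + lip (f z) (Dzb f z) = 0"
    using lip_const_Dz[OF U_open z differentiable_at[OF f_smooth z] differentiable_at[OF f_smooth z], of 1]
      f_sphere by auto
  then show "lip (f z) (Dz f z) = 0" "lip (f z) (Dzb f z) = 0"
    by (simp_all add: lip_commute[of "f z"])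
  show "lip (Dz f z) (Dz f z) = 0" "lip (Dz f z) (Dzb f z) = conf z"
    using f_conf z conf_def by auto
  show "lip (Dzb f z) (Dzb f z) = 0"
    unfolding Dzb_f[OF z] lip_vcnj using f_conf z by simp
  show "lip (N1 z) (f z) = 0" "lip (N1 z) (Dz f z) = 0" "lip (N2 z) (f z) = 0" "lip (N2 z) (Dz f z) = 0"
    using N_normal z by auto
  show "lip (N1 z) (Dzb f z) = 0" "lip (N2 z) (Dzb f z) = 0"
    using lip_vcnj[of "N1 z" "Dz f z"] lip_vcnj[of "N2 z" "Dz f z"] N_normal z realv_frame[OF z]
    by (simp_all add: Dzb_f[OF z])
  show "lip (N1 z) (N1 z) = 1" "lip (N2 z) (N2 z) = -1" "lip (N1 z) (N2 z) = 0"
    using N_orthonormal z by auto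
qed

lemma frame_lip':
  assumes z: "z \<in> U"
  shows "lip (Dz f z) (f z) = 0" "lip (Dzb f z) (f z) = 0" "lip (Dzb f z) (Dz f z) = conf z"
    "lip (f z) (N1 z) = 0" "lip (Dz f z) (N1 z) = 0" "lip (Dzb f z) (N1 z) = 0"
    "lip (f z) (N2 z) = 0" "lip (Dz f z) (N2 z) = 0" "lip (Dzb f z) (N2 z) = 0"
    "lip (N2 z) (N1 z) = 0"
  using frame_lip[OF z] lip_commute by metis+

lemma frame_expansion:
  assumes z: "z \<in> U"
  shows "v = lip v (f z) *s f z + (lip v (Dzb f z) / conf z) *s Dz f z
      + (lip v (Dz f z) / conf z) *s Dzb f z + lip v (N1 z) *s N1 z - lip v (N2 z) *s N2 z"
proof -
  note G = frame_lip[OF z] frame_lip'[OF z] conf_nonzero[of z]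
  have indep: "c0 = 0 \<and> c1 = 0 \<and> c2 = 0 \<and> c3 = 0 \<and> c4 = 0"
    if "c0 *s f z + c1 *s Dz f z + c2 *s Dzb f z + c3 *s N1 z + c4 *s N2 z = 0" for c0 c1 c2 c3 c4
  proof -
    let ?w = "c0 *s f z + c1 *s Dz f z + c2 *s Dzb f z + c3 *s N1 z + c4 *s N2 z"
    have "lip ?w (f z) = 0" "lip ?w (Dz f z) = 0" "lip ?w (Dzb f z) = 0" "lip ?w (N1 z) = 0" "lip ?w (N2 z) = 0"
      unfolding that by simp_all
    then show ?thesis
      using G by simp
  qed
  obtain c0 c1 c2 c3 c4 where c: "v = c0 *s f z + c1 *s Dz f z + c2 *s Dzb f z + c3 *s N1 z + c4 *s N2 z"
    using five_independent_span[OF indep] by blast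
  have "lip v (f z) = c0" "lip v (Dzb f z) = c1 * conf z" "lip v (Dz f z) = c2 * conf z"
    "lip v (N1 z) = c3" "lip v (N2 z) = - c4"
    unfolding c using G by simp_all
  then show ?thesis
    using G c by simp
qed

lemma nu_lip:
  assumes z: "z \<in> U"
  shows "lip (nu z) (nu z) = 0" "lip (nu z) (f z) = 0" "lip (nu z) (Dz f z) = 0"
    "lip (nu z) (Dzb f z) = 0" "lip (nu z) (N1 z) = 1" "lip (nu z) (N2 z) = -1"
    "lip (f z) (nu z) = 0" "lip (Dz f z) (nu z) = 0" "lip (Dzb f z) (nu z) = 0"
    "lip (N1 z) (nu z) = 1" "lip (N2 z) (nu z) = -1"
  using frame_lip[OF z] frame_lip'[OF z] unfolding nu_def by simp_all

lemma future_nu: "z \<in> U \<Longrightarrow> future (nu z)"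
  unfolding nu_def using future_add_unit_timelike N_real N_orthonormal N2_future by auto

text \<open>Here the orientation hypothesis enters: the mean curvature vector is a multiple of the
  null vector \<open>\<nu>\<close>, which is orthogonal to \<open>f\<close>, \<open>\<nu>\<close> and \<open>\<nu>\<^sub>z\<close>.\<close>

lemma Dzb_Dz_f_multiple_nu:
  assumes z: "z \<in> U"
  obtains h :: real where "Dzb (Dz f) z = conf z *s (complex_of_real h *s nu z - f z)"
proof -
  obtain h :: "complex \<Rightarrow> real" where "meanH f u z = complex_of_real (h z) *s nu z"
    using orientation z unfolding nu_def by blast
  moreover have "Dzb (Dz f) z = conf z *s (meanH f u z - f z)"
    unfolding meanH_def conf_def[symmetric] using conf_nonzero[of z] by (simp add: vec_eq_iff)
  ultimately show ?thesis
    using that[of "h z"] by simp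
qed

lemma lip_Dzb_Dz_f_nu: "z \<in> U \<Longrightarrow> lip (Dzb (Dz f) z) (nu z) = 0"
  by (metis Dzb_Dz_f_multiple_nu nu_lip(1,7) lip_diff_left lip_scale_left diff_self mult_zero_right)

lemma Dz_nu_lip:
  assumes z: "z \<in> U"
  shows "Dzb nu z = vcnj (Dz nu z)"
    "lip (Dz nu z) (f z) = 0" "lip (Dz nu z) (Dz f z) = - xi z" "lip (Dz nu z) (Dzb f z) = 0"
    "lip (Dz nu z) (nu z) = 0" "lip (Dz nu z) (N2 z) = - omega z"
proof -
  note d = differentiable_at[OF smooth_nu z] differentiable_at[OF f_smooth z]
    differentiable_at[OF smooth_Dz_f(1) z]
  show Dzb_nu: "Dzb nu z = vcnj (Dz nu z)"
    using Dzb_real[OF U_open z _ d(1)] realv_frame realv_iff_vcnj by auto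
  have "lip (Dz nu z) (f z) + lip (nu z) (Dz f z) = 0"
    using lip_const_Dz(1)[OF U_open z d(1,2) nu_lip(2)] .
  then show "lip (Dz nu z) (f z) = 0"
    using nu_lip[OF z] by simp
  have "lip (Dz nu z) (Dz f z) + lip (nu z) (Dz (Dz f) z) = 0"
    using lip_const_Dz(1)[OF U_open z d(1,3) nu_lip(3)] .
  then show "lip (Dz nu z) (Dz f z) = - xi z"
    unfolding xi_def by (simp add: lip_commute[of "nu z"] add_eq_0_iff)
  have "lip (Dzb nu z) (Dz f z) + lip (nu z) (Dzb (Dz f) z) = 0"
    using lip_const_Dz(2)[OF U_open z d(1,3) nu_lip(3)] .
  then have "lip (Dzb nu z) (Dz f z) = 0"
    using lip_Dzb_Dz_f_nu[OF z] by (simp add: lip_commute[of "nu z"])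
  then show "lip (Dz nu z) (Dzb f z) = 0"
    using lip_vcnj[of "Dzb nu z" "Dz f z"] by (simp add: Dzb_nu Dzb_f[OF z])
  have "lip (Dz nu z) (nu z) + lip (nu z) (Dz nu z) = 0"
    using lip_const_Dz(1)[OF U_open z d(1,1) nu_lip(1)] .
  then show "lip (Dz nu z) (nu z) = 0"
    by (simp add: lip_commute[of "nu z"])
  then show "lip (Dz nu z) (N2 z) = - omega z"
    unfolding omega_def nu_def[of z] by (simp add: eq_neg_iff_add_eq_0 add.commute)
qed

lemma Dz_nu: "z \<in> U \<Longrightarrow> Dz nu z = (- xi z / conf z) *s Dzb f z + omega z *s nu z"
  using frame_expansion[of z "Dz nu z"] Dz_nu_lip[of z]
  by (simp add: omega_def[symmetric] nu_def vec_eq_iff algebra_simps)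

lemma Dzb_nu: "z \<in> U \<Longrightarrow> Dzb nu z = (- cnj (xi z) / conf z) *s Dz f z + cnj (omega z) *s nu z"
  using Dz_nu_lip(1)[of z] Dz_nu[of z] Dzb_f[of z] realv_frame[of z] conf_real[of z] by simp

lemma lip_Dz_Dz_f_Dz_f: "z \<in> U \<Longrightarrow> lip (Dz (Dz f) z) (Dz f z) = 0"
  using lip_const_Dz(1)[OF U_open _ differentiable_at[OF smooth_Dz_f(1)] differentiable_at[OF smooth_Dz_f(1)], of z 0]
    f_conf lip_commute[of "Dz f z"] by auto

lemma lip_Dz_scaled_nu:
  assumes z: "z \<in> U" and d: "g differentiable (at z)" and r: "\<And>w. w \<in> U \<Longrightarrow> cnj (g w) = g w"
  shows "lip (Dz (\<lambda>w. g w *s nu w) z) (Dz (\<lambda>w. g w *s nu w) z) = 0"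
    "lip (Dz (\<lambda>w. g w *s nu w) z) (Dzb (\<lambda>w. g w *s nu w) z) = g z * g z * (xi z * cnj (xi z)) / conf z"
proof -
  note G = frame_lip[OF z] frame_lip'[OF z] nu_lip[OF z] conf_nonzero[of z]
  have D: "Dz (\<lambda>w. g w *s nu w) z = dzc g z *s nu z + g z *s ((- xi z / conf z) *s Dzb f z + omega z *s nu z)"
    using Dz_scale(1)[OF d differentiable_at[OF smooth_nu z]] Dz_nu[OF z] by simp
  have Db: "Dzb (\<lambda>w. g w *s nu w) z = cnj (dzc g z) *s nu z
      + g z *s ((- cnj (xi z) / conf z) *s Dz f z + cnj (omega z) *s nu z)"
    using Dz_scale(2)[OF d differentiable_at[OF smooth_nu z]] Dzb_nu[OF z] dzbc_real[OF U_open z r d]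
    by simp
  show "lip (Dz (\<lambda>w. g w *s nu w) z) (Dz (\<lambda>w. g w *s nu w) z) = 0"
    unfolding D using G by simp
  show "lip (Dz (\<lambda>w. g w *s nu w) z) (Dzb (\<lambda>w. g w *s nu w) z) = g z * g z * (xi z * cnj (xi z)) / conf z"
    unfolding D Db using G by (simp add: field_simps)
qed

lemma lift_scale_real: "cnj (lift_scale z) = lift_scale z"
  unfolding lift_scale_def by simp

text \<open>The normalisation \<open>\<langle>Y\<^sub>z, Y\<^sub>z\<^sub>b\<rangle> = 1/2\<close> of the canonical lift fixes the scale of \<open>\<nu>\<close>.\<close>

lemma lift_scale_normalised:
  assumes z: "z \<in> U"
  shows "lift_scale z * lift_scale z * (xi z * cnj (xi z)) / conf z = 1/2"
proof -
  have "xi z * cnj (xi z) = complex_of_real ((cmod (xi z))\<^sup>2)"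
    by (simp add: complex_mult_cnj cmod_power2)
  moreover have "conf z = complex_of_real (exp (u z) * exp (u z))"
    unfolding conf_real by (simp flip: exp_add)
  moreover have "(exp (u z) / (sqrt 2 * cmod (xi z))) * (exp (u z) / (sqrt 2 * cmod (xi z))) * (cmod (xi z))\<^sup>2
       / (exp (u z) * exp (u z)) = 1/2"
    using xi_nonzero[OF z] by (simp add: field_simps power2_eq_square)
  ultimately show ?thesis
    unfolding lift_scale_def by (metis of_real_1 of_real_divide of_real_mult of_real_numeral)
qed

lemma Y0_lift:
  assumes z: "z \<in> U"
  shows "realv (Y0 z)" "lip (Y0 z) (Y0 z) = 0" "future (Y0 z)"
    "lip (Dz Y0 z) (Dz Y0 z) = 0" "lip (Dz Y0 z) (Dzb Y0 z) = 1/2"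
proof -
  have Y0: "Y0 = (\<lambda>w. lift_scale w *s nu w)"
    unfolding Y0_def[abs_def] ..
  show "realv (Y0 z)"
    unfolding Y0_def realv_iff_vcnj using realv_frame[OF z] lift_scale_real[of z] by simp
  show "lip (Y0 z) (Y0 z) = 0"
    unfolding Y0_def using nu_lip[OF z] by simp
  show "future (Y0 z)"
    unfolding Y0_def lift_scale_def
    by (rule future_scale[OF future_nu[OF z]]) (use xi_nonzero[OF z] in simp)
  show "lip (Dz Y0 z) (Dz Y0 z) = 0" "lip (Dz Y0 z) (Dzb Y0 z) = 1/2"
    unfolding Y0 using lip_Dz_scaled_nu[OF z differentiable_at[OF smooth_lift_scale z] lift_scale_real]
      lift_scale_normalised[OF z] by simp_all
qed

lemma canonical_lift_Y0: "canonical_lift U (\<lambda>z. N1 z + N2 z) Y0"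
  unfolding canonical_lift_def
proof (intro conjI ballI smooth_Y0)
  fix z assume "z \<in> U"
  show "\<exists>c::real. Y0 z = complex_of_real c *s (N1 z + N2 z)"
    unfolding Y0_def lift_scale_def nu_def by blast
qed (use Y0_lift in blast)+

lemma canonical_lift_unique:
  assumes Y: "canonical_lift U (\<lambda>z. N1 z + N2 z) Y" and z: "z \<in> U"
  shows "Y z = Y0 z"
proof -
  have Y_lift: "realv (Y w) \<and> (\<exists>c::real. Y w = complex_of_real c *s nu w) \<and> future (Y w) \<and>
      lip (Dz Y w) (Dzb Y w) = 1/2" if "w \<in> U" for w
    using Y that unfolding canonical_lift_def nu_def by blast
  define c where "c w = lip (Y w) (N1 w)" for w
  have Y_eq: "Y w = c w *s nu w" and c_real: "cnj (c w) = c w" if "w \<in> U" for w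
    using Y_lift[OF that] nu_lip(5)[OF that] unfolding c_def by auto
  have "smooth_on U c"
    unfolding c_def[abs_def] using Y N1_smooth unfolding canonical_lift_def
    by (intro smooth_on_lip[OF U_open]) auto
  then have "lip (Dz Y z) (Dzb Y z) = c z * c z * (xi z * cnj (xi z)) / conf z"
    using Dz_cong[OF U_open z Y_eq] lip_Dz_scaled_nu(2)[OF z differentiable_at[OF _ z] c_real] by simp
  then have "c z * c z * (xi z * cnj (xi z)) / conf z = 1/2"
    using Y_lift[OF z] by simp
  then have "c z * c z * ((xi z * cnj (xi z)) / conf z) = lift_scale z * lift_scale z * ((xi z * cnj (xi z)) / conf z)"
    by (simp only: times_divide_eq_right lift_scale_normalised[OF z])
  moreover have "xi z * cnj (xi z) / conf z \<noteq> 0"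
    using xi_nonzero[OF z] conf_nonzero[of z] by simp
  ultimately have "c z * c z = lift_scale z * lift_scale z"
    using mult_right_cancel by blast
  obtain r :: real where r: "c z = complex_of_real r"
    using c_real[OF z] by (metis Reals_cnj_iff Reals_cases)
  define l where "l = exp (u z) / (sqrt 2 * cmod (xi z))"
  have l: "lift_scale z = complex_of_real l" "l > 0"
    unfolding l_def lift_scale_def using xi_nonzero[OF z] by simp_all
  have "r\<^sup>2 = l\<^sup>2"
    using \<open>c z * c z = _\<close> r l(1) by (simp flip: of_real_mult add: power2_eq_square)
  moreover have "r > 0"
    using Y_lift[OF z] future_nu[OF z] unfolding Y_eq[OF z] r future_def by (simp add: mult_less_0_iff)
  ultimately have "r = l"
    using l(2) by (simp add: power2_eq_iff_nonneg)
  then show ?thesis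
    using Y_eq[OF z] r l unfolding Y0_def by simp
qed

lemma canonical_lift_iff: "canonical_lift U (\<lambda>z. N1 z + N2 z) Y \<longleftrightarrow> (\<forall>z\<in>U. Y z = Y0 z)"
proof
  assume e: "\<forall>z\<in>U. Y z = Y0 z"
  then have e': "\<And>w. w \<in> U \<Longrightarrow> Y w = Y0 w"
    by blast
  have eqs: "Y z = Y0 z" "Dz Y z = Dz Y0 z" "Dzb Y z = Dzb Y0 z" if "z \<in> U" for z
    using Dz_cong[OF U_open that e'] e'[OF that] by simp_all
  have "smooth_on U Y"
    using smooth_on_cong[OF U_open smooth_Y0 e'] .
  with canonical_lift_Y0 show "canonical_lift U (\<lambda>z. N1 z + N2 z) Y"
    unfolding canonical_lift_def by (simp add: eqs)
qed (use canonical_lift_unique in blast)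


definition "Ymix z = Dzb (Dz Y0) z"

lemma Ymix_commute: "z \<in> U \<Longrightarrow> Ymix z = Dz (Dzb Y0) z"
  unfolding Ymix_def using Dzb_Dz_commute[OF U_open smooth_Y0] .

lemma Dzb_Y0: "z \<in> U \<Longrightarrow> Dzb Y0 z = vcnj (Dz Y0 z)"
  using Dzb_real[OF U_open _ _ differentiable_at[OF smooth_Y0]] Y0_lift(1) by blast

lemma differentiable_Y0:
  assumes "z \<in> U"
  shows "Y0 differentiable (at z)" "Dz Y0 differentiable (at z)" "Dzb Y0 differentiable (at z)"
  using differentiable_at[OF smooth_Y0 assms] differentiable_Dz[OF U_open smooth_Y0 assms] by auto

lemma Y0_lip_Dz:
  assumes w: "w \<in> U"
  shows "lip (Y0 w) (Dz Y0 w) = 0" "lip (Y0 w) (Dzb Y0 w) = 0" "lip (Dzb Y0 w) (Dzb Y0 w) = 0"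
proof -
  have "lip (Dz Y0 w) (Y0 w) + lip (Y0 w) (Dz Y0 w) = 0" "lip (Dzb Y0 w) (Y0 w) + lip (Y0 w) (Dzb Y0 w) = 0"
    using lip_const_Dz[OF U_open w differentiable_Y0(1,1)[OF w] Y0_lift(2)] by auto
  then show "lip (Y0 w) (Dz Y0 w) = 0" "lip (Y0 w) (Dzb Y0 w) = 0"
    by (simp_all add: lip_commute[of "Y0 w"])
  show "lip (Dzb Y0 w) (Dzb Y0 w) = 0"
    using Y0_lift(4)[OF w] lip_vcnj[of "Dz Y0 w" "Dz Y0 w"] by (simp add: Dzb_Y0[OF w])
qed

lemma V_frame_lip:
  assumes z: "z \<in> U"
  shows "lip (Y0 z) (Y0 z) = 0" "lip (Y0 z) (Dz Y0 z) = 0" "lip (Y0 z) (Dzb Y0 z) = 0"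
    "lip (Dz Y0 z) (Dz Y0 z) = 0" "lip (Dzb Y0 z) (Dzb Y0 z) = 0" "lip (Dz Y0 z) (Dzb Y0 z) = 1/2"
    "lip (Y0 z) (Ymix z) = -1/2" "lip (Dz Y0 z) (Ymix z) = 0" "lip (Dzb Y0 z) (Ymix z) = 0"
proof -
  note d = differentiable_Y0[OF z]
  show "lip (Y0 z) (Y0 z) = 0" "lip (Dz Y0 z) (Dz Y0 z) = 0" "lip (Dz Y0 z) (Dzb Y0 z) = 1/2"
    using Y0_lift[OF z] by simp_all
  show "lip (Y0 z) (Dz Y0 z) = 0" "lip (Y0 z) (Dzb Y0 z) = 0" "lip (Dzb Y0 z) (Dzb Y0 z) = 0"
    using Y0_lip_Dz[OF z] .
  have "lip (Dzb Y0 z) (Dz Y0 z) + lip (Y0 z) (Dzb (Dz Y0) z) = 0"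
    using lip_const_Dz(2)[OF U_open z d(1,2) Y0_lip_Dz(1)] .
  then show "lip (Y0 z) (Ymix z) = -1/2"
    unfolding Ymix_def using Y0_lift(5)[OF z] lip_commute[of "Dzb Y0 z" "Dz Y0 z"]
    by (simp add: add_eq_0_iff)
  have "lip (Dzb (Dz Y0) z) (Dz Y0 z) + lip (Dz Y0 z) (Dzb (Dz Y0) z) = 0"
    using lip_const_Dz(2)[OF U_open z d(2,2) Y0_lift(4)] .
  then show "lip (Dz Y0 z) (Ymix z) = 0"
    unfolding Ymix_def by (simp add: lip_commute[of "Dz Y0 z"])
  have "lip (Dz (Dzb Y0) z) (Dzb Y0 z) + lip (Dzb Y0 z) (Dz (Dzb Y0) z) = 0"
    using lip_const_Dz(1)[OF U_open z d(3,3) Y0_lip_Dz(3)] .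
  then show "lip (Dzb Y0 z) (Ymix z) = 0"
    unfolding Ymix_commute[OF z] by (simp add: lip_commute[of "Dzb Y0 z"])
qed

lemma f_orthogonal_V:
  assumes z: "z \<in> U"
  shows "lip (f z) (Y0 z) = 0" "lip (f z) (Dz Y0 z) = 0" "lip (f z) (Dzb Y0 z) = 0" "lip (f z) (Ymix z) = 0"
proof -
  note d = differentiable_Y0[OF z]
  have fY: "lip (f w) (Y0 w) = 0" "lip (Dz f w) (Y0 w) = 0" "lip (Dzb f w) (Y0 w) = 0" if "w \<in> U" for w
    unfolding Y0_def using nu_lip[OF that] by simp_all
  then show "lip (f z) (Y0 z) = 0"
    using z by blast
  have fYz: "lip (f w) (Dz Y0 w) = 0" "lip (f w) (Dzb Y0 w) = 0" if "w \<in> U" for w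
    using lip_const_Dz[OF U_open that differentiable_at[OF f_smooth that] differentiable_at[OF smooth_Y0 that] fY(1)]
      fY[OF that] by simp_all
  then show "lip (f z) (Dz Y0 z) = 0" "lip (f z) (Dzb Y0 z) = 0"
    using z by blast+
  have "lip (Dzb f z) (Dz Y0 z) + lip (f z) (Dzb (Dz Y0) z) = 0"
    using lip_const_Dz(2)[OF U_open z differentiable_at[OF f_smooth z] d(2) fYz(1)] .
  moreover have "Dz Y0 z = dzc lift_scale z *s nu z + lift_scale z *s Dz nu z"
    unfolding Y0_def[abs_def]
    using Dz_scale(1)[OF differentiable_at[OF smooth_lift_scale z] differentiable_at[OF smooth_nu z]] .
  then have "lip (Dzb f z) (Dz Y0 z) = 0"
    using Dz_nu[OF z] frame_lip[OF z] nu_lip[OF z] by simp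
  ultimately show "lip (f z) (Ymix z) = 0"
    unfolding Ymix_def by simp
qed

lemma Ymix_real: "z \<in> U \<Longrightarrow> vcnj (Ymix z) = Ymix z"
proof -
  assume z: "z \<in> U"
  have "vcnj (Ymix z) = Dz (\<lambda>w. vcnj (Dz Y0 w)) z"
    unfolding Ymix_def using Dz_vcnj[OF differentiable_Y0(2)[OF z]] by simp
  also have "\<dots> = Dz (Dzb Y0) z"
    using Dz_cong(1)[OF U_open z, of "\<lambda>w. vcnj (Dz Y0 w)" "Dzb Y0"] Dzb_Y0 by simp
  finally show ?thesis
    using Ymix_commute[OF z] by simp
qed

lemma V_frame_lip':
  assumes z: "z \<in> U"
  shows "lip (Dz Y0 z) (Y0 z) = 0" "lip (Dzb Y0 z) (Y0 z) = 0" "lip (Dzb Y0 z) (Dz Y0 z) = 1/2"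
    "lip (Ymix z) (Y0 z) = -1/2" "lip (Ymix z) (Dz Y0 z) = 0" "lip (Ymix z) (Dzb Y0 z) = 0"
    "lip (Y0 z) (f z) = 0" "lip (Dz Y0 z) (f z) = 0" "lip (Dzb Y0 z) (f z) = 0" "lip (Ymix z) (f z) = 0"
  using V_frame_lip[OF z] f_orthogonal_V[OF z] lip_commute by metis+

lemma orthogonal_V_eq_multiple_f:
  assumes z: "z \<in> U"
    and w: "lip w (Y0 z) = 0" "lip w (Dz Y0 z) = 0" "lip w (Dzb Y0 z) = 0" "lip w (Ymix z) = 0"
  shows "w = lip w (f z) *s f z"
proof -
  note G = V_frame_lip[OF z] V_frame_lip'[OF z] f_orthogonal_V[OF z] frame_lip(1)[OF z]
  have "c0 = 0 \<and> c1 = 0 \<and> c2 = 0 \<and> c3 = 0 \<and> c4 = 0"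
    if "c0 *s f z + c1 *s Y0 z + c2 *s Dz Y0 z + c3 *s Dzb Y0 z + c4 *s Ymix z = 0" for c0 c1 c2 c3 c4
  proof -
    let ?v = "c0 *s f z + c1 *s Y0 z + c2 *s Dz Y0 z + c3 *s Dzb Y0 z + c4 *s Ymix z"
    have "lip ?v (f z) = 0" "lip ?v (Y0 z) = 0" "lip ?v (Dz Y0 z) = 0" "lip ?v (Dzb Y0 z) = 0"
      "lip ?v (Ymix z) = 0"
      unfolding that by simp_all
    then show ?thesis
      using G by simp
  qed
  from five_independent_span[OF this] obtain c0 c1 c2 c3 c4
    where c: "w = c0 *s f z + c1 *s Y0 z + c2 *s Dz Y0 z + c3 *s Dzb Y0 z + c4 *s Ymix z"
    by blast
  have "lip w (Y0 z) = - c4 / 2" "lip w (Dz Y0 z) = c3 / 2" "lip w (Dzb Y0 z) = c2 / 2"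
    "lip w (Ymix z) = - c1 / 2 + c4 * lip (Ymix z) (Ymix z)" "lip w (f z) = c0"
    unfolding c using G by simp_all
  then have "c1 = 0" "c2 = 0" "c3 = 0" "c4 = 0" "c0 = lip w (f z)"
    using w by simp_all
  then show ?thesis
    using c by simp
qed

lemma Vperp_Y0:
  assumes z: "z \<in> U"
  shows "Vperp Y0 z = {complex_of_real t *s f z | t. True}"
proof (intro set_eqI iffI)
  fix w assume "w \<in> {complex_of_real t *s f z | t. True}"
  then obtain t where t: "w = complex_of_real t *s f z"
    by blast
  then show "w \<in> Vperp Y0 z"
    using realv_frame[OF z] f_orthogonal_V[OF z]
    unfolding Vperp_def Ymix_def[symmetric] realv_iff_vcnj by simp
next
  fix w assume "w \<in> Vperp Y0 z"
  then have "realv w" and "lip w (Y0 z) = 0" "lip w (Dz Y0 z) = 0" "lip w (Dzb Y0 z) = 0"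
    "lip w (Ymix z) = 0"
    unfolding Vperp_def Ymix_def by auto
  moreover from this have "cnj (lip w (f z)) = lip w (f z)"
    using lip_vcnj[of w "f z"] realv_frame[OF z] realv_iff_vcnj by simp
  then have "lip w (f z) = complex_of_real (Re (lip w (f z)))"
    by (simp add: complex_eq_iff)
  ultimately show "w \<in> {complex_of_real t *s f z | t. True}"
    using orthogonal_V_eq_multiple_f[OF z] by (metis (mono_tags, lifting) mem_Collect_eq)
qed

lemma conormal_Y0:
  assumes z: "z \<in> U"
  shows "conormal Y0 z = (2 * lip (Ymix z) (Ymix z)) *s Y0 z + 2 *s Ymix z"
proof -
  note G = V_frame_lip[OF z] V_frame_lip'[OF z]
  let ?q = "lip (Ymix z) (Ymix z)"
  let ?N = "(2 * ?q) *s Y0 z + 2 *s Ymix z"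
  have "realv ?N"
    unfolding realv_iff_vcnj
    using lip_vcnj[of "Ymix z" "Ymix z"] Ymix_real[OF z] Y0_lift(1)[OF z] realv_iff_vcnj by simp
  moreover have "inV Y0 z ?N"
    unfolding inV_def by (rule exI[of _ "2 * ?q"], rule exI[of _ 0], rule exI[of _ 0], rule exI[of _ 2])
      (simp add: Ymix_def)
  ultimately have N: "realv ?N \<and> inV Y0 z ?N \<and> lip ?N ?N = 0 \<and> lip ?N (Dz Y0 z) = 0 \<and> lip (Y0 z) ?N = -1"
    using G by (simp add: algebra_simps)
  have "N = ?N" if h: "realv N \<and> inV Y0 z N \<and> lip N N = 0 \<and> lip N (Dz Y0 z) = 0 \<and> lip (Y0 z) N = -1" for N
  proof -
    obtain a b c d where N: "N = a *s Y0 z + b *s Dz Y0 z + c *s Dzb Y0 z + d *s Ymix z"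
      using h unfolding inV_def Ymix_def by blast
    have c: "c = 0"
      using h G unfolding N by simp
    have "lip N (Dzb Y0 z) = cnj (lip N (Dz Y0 z))"
      using lip_vcnj[of N "Dz Y0 z"] h Dzb_Y0[OF z] realv_iff_vcnj by simp
    then have b: "b = 0"
      using h G unfolding N by simp
    have d: "d = 2"
      using h G unfolding N by simp
    have "a = 2 * ?q"
      using h G unfolding N b c d by (simp add: algebra_simps)
    then show ?thesis
      unfolding N b c d by simp
  qed
  then show ?thesis
    unfolding conormal_def using N by (intro the_equality) blast+
qed

lemma Dz_Dz_Y0_lip:
  assumes z: "z \<in> U"
  shows "lip (Dz (Dz Y0) z) (Y0 z) = 0" "lip (Dz (Dz Y0) z) (Dz Y0 z) = 0"
    "lip (Dz (Dz Y0) z) (Dzb Y0 z) = 0" "lip (Dz (Dz Y0) z) (f z) = lift_scale z * xi z"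
proof -
  note d = differentiable_Y0[OF z] and G = V_frame_lip[OF z] V_frame_lip'[OF z]
  have "lip (Dz (Dz Y0) z) (Y0 z) + lip (Dz Y0 z) (Dz Y0 z) = 0"
    using lip_const_Dz(1)[OF U_open z d(2,1)] V_frame_lip'(1) by blast
  then show "lip (Dz (Dz Y0) z) (Y0 z) = 0"
    using G by simp
  have "lip (Dz (Dz Y0) z) (Dz Y0 z) + lip (Dz Y0 z) (Dz (Dz Y0) z) = 0"
    using lip_const_Dz(1)[OF U_open z d(2,2) Y0_lift(4)] .
  then show "lip (Dz (Dz Y0) z) (Dz Y0 z) = 0"
    by (simp add: lip_commute[of "Dz Y0 z"])
  have "lip (Dz (Dz Y0) z) (Dzb Y0 z) + lip (Dz Y0 z) (Dz (Dzb Y0) z) = 0"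
    using lip_const_Dz(1)[OF U_open z d(2,3) Y0_lift(5)] .
  then show "lip (Dz (Dz Y0) z) (Dzb Y0 z) = 0"
    using Ymix_commute[OF z] G by simp
  have "lip (Dz (Dz Y0) z) (f z) + lip (Dz Y0 z) (Dz f z) = 0"
    using lip_const_Dz(1)[OF U_open z d(2) differentiable_at[OF f_smooth z]] V_frame_lip'(8) by blast
  moreover have "Dz Y0 z = dzc lift_scale z *s nu z + lift_scale z *s Dz nu z"
    unfolding Y0_def[abs_def]
    using Dz_scale(1)[OF differentiable_at[OF smooth_lift_scale z] differentiable_at[OF smooth_nu z]] .
  then have "lip (Dz Y0 z) (Dz f z) = - lift_scale z * xi z"
    using nu_lip[OF z] Dz_nu_lip[OF z] by simp
  ultimately show "lip (Dz (Dz Y0) z) (f z) = lift_scale z * xi z"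
    by simp
qed

lemma hopf_Y0:
  assumes z: "z \<in> U"
  shows "hopf Y0 z = (lift_scale z * xi z) *s f z"
proof -
  note G = V_frame_lip[OF z] V_frame_lip'[OF z] and Y = Dz_Dz_Y0_lip[OF z]
  have "schwarzian Y0 z = 4 * lip (Dz (Dz Y0) z) (Ymix z)"
    unfolding schwarzian_def conormal_Y0[OF z] using Y by simp
  then have "lip (hopf Y0 z) (Y0 z) = 0" "lip (hopf Y0 z) (Dz Y0 z) = 0"
    "lip (hopf Y0 z) (Dzb Y0 z) = 0" "lip (hopf Y0 z) (Ymix z) = 0"
    unfolding hopf_def using Y G by simp_all
  from orthogonal_V_eq_multiple_f[OF z this]
  show ?thesis
    unfolding hopf_def using Y G by simp
qed


text \<open>A Codazzi equation: \<open>\<xi>\<^sub>z\<^sub>b\<close> has no component beyond the normal connection, because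
  \<open>f\<^sub>z\<^sub>z\<^sub>b\<close> is a combination of \<open>f\<close> and \<open>\<nu>\<close>.\<close>

lemma dzbc_xi:
  assumes z: "z \<in> U"
  shows "dzbc xi z = cnj (omega z) * xi z"
proof -
  have d: "Dz (Dz f) differentiable (at z)" "nu differentiable (at z)" "Dzb (Dz f) differentiable (at z)"
    using differentiable_at[OF smooth_Dz_f(2) z] differentiable_at[OF smooth_nu z]
      differentiable_at[OF smooth_Dz_f(3) z] .
  have "lip (Dz (Dzb (Dz f)) z) (nu z) + lip (Dzb (Dz f) z) (Dz nu z) = 0"
    using lip_const_Dz(1)[OF U_open z d(3,2) lip_Dzb_Dz_f_nu] .
  moreover obtain h :: real where "Dzb (Dz f) z = conf z *s (complex_of_real h *s nu z - f z)"
    using Dzb_Dz_f_multiple_nu[OF z] .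
  then have "lip (Dzb (Dz f) z) (Dz nu z) = 0"
    using Dz_nu_lip(2,5)[OF z] by (simp add: lip_commute[of _ "Dz nu z"])
  ultimately have "lip (Dzb (Dz (Dz f)) z) (nu z) = 0"
    using Dzb_Dz_commute[OF U_open smooth_Dz_f(1) z] by simp
  moreover have "lip (Dz (Dz f) z) (Dzb nu z) = cnj (omega z) * xi z"
    unfolding Dzb_nu[OF z] using lip_Dz_Dz_f_Dz_f[OF z] unfolding xi_def by simp
  ultimately show ?thesis
    unfolding xi_def[abs_def] dzc_lip(2)[OF d(1,2)] by simp
qed

lemma hopf_coefficient:
  assumes z: "z \<in> U" and k: "hopf Y0 z = k *s f z"
  shows "k = lift_scale z * xi z"
proof -
  have "lip (hopf Y0 z) (f z) = k"
    using frame_lip(1)[OF z] by (simp add: k)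
  moreover have "lip (hopf Y0 z) (f z) = lift_scale z * xi z"
    using frame_lip(1)[OF z] by (simp add: hopf_Y0[OF z])
  ultimately show ?thesis
    by simp
qed

lemma lift_scale_xi_polar:
  assumes z: "z \<in> U" and \<theta>: "xi z = complex_of_real (cmod (xi z)) * exp (\<i> * complex_of_real \<theta>)"
  shows "lift_scale z * xi z = exp (complex_of_real (u z) + \<i> * complex_of_real \<theta>) / complex_of_real (sqrt 2)"
proof -
  have "lift_scale z * xi z = complex_of_real (exp (u z) / (sqrt 2 * cmod (xi z))) * complex_of_real (cmod (xi z))
      * exp (\<i> * complex_of_real \<theta>)"
    unfolding lift_scale_def by (subst \<theta>) (simp only: mult.assoc)
  also have "\<dots> = complex_of_real (exp (u z) / sqrt 2) * exp (\<i> * complex_of_real \<theta>)"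
    using xi_nonzero[OF z] by (simp add: field_simps)
  also have "\<dots> = exp (complex_of_real (u z) + \<i> * complex_of_real \<theta>) / complex_of_real (sqrt 2)"
    by (simp add: exp_add field_simps flip: exp_of_real)
  finally show ?thesis .
qed

text \<open>If \<open>\<lambda> \<xi> = e\<^sup>g / \<surd>2\<close>, differentiating in \<open>z\<^sub>b\<close> and using \<open>dzbc_xi\<close> shows that
  \<open>g\<^sub>z\<^sub>b Y - Y\<^sub>z\<^sub>b\<close> has no \<open>\<nu>\<close>-component, so it is the multiple \<open>\<lambda> \<xi>\<^sub>b/e\<^sup>2\<^sup>u\<close> of \<open>f\<^sub>z\<close>.\<close>

lemma Dz_f_eq:
  assumes z: "z \<in> U" and g: "smooth_on U g"
    and g_eq: "\<And>w. w \<in> U \<Longrightarrow> lift_scale w * xi w = exp (g w) / complex_of_real (sqrt 2)"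
  shows "Dz f z = (complex_of_real (sqrt 2) * exp (g z)) *s (dzbc g z *s Y0 z - Dzb Y0 z)"
proof -
  have d: "lift_scale differentiable (at z)" "xi differentiable (at z)" "g differentiable (at z)"
    using differentiable_at[OF smooth_lift_scale z] differentiable_at[OF smooth_xi z]
      differentiable_at[OF g z] .
  have "dzbc (\<lambda>w. lift_scale w * xi w) z = dzbc (\<lambda>w. exp (g w) * (1 / complex_of_real (sqrt 2))) z"
    using dzc_cong(2)[OF U_open z, of "\<lambda>w. lift_scale w * xi w" "\<lambda>w. exp (g w) * (1 / complex_of_real (sqrt 2))"]
      g_eq by simp
  also have "\<dots> = exp (g z) * dzbc g z * (1 / complex_of_real (sqrt 2))"
    using dzbc_mult[OF dirderiv_exp(1)[OF d(3)], of "\<lambda>_. 1 / complex_of_real (sqrt 2)"]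
      dzc_const_on(2)[of UNIV z] dzbc_exp[OF d(3)] by simp
  finally have "dzbc lift_scale z * xi z + lift_scale z * dzbc xi z = lift_scale z * xi z * dzbc g z"
    using dzbc_mult[OF d(1,2)] g_eq[OF z] by simp
  then have "(dzbc lift_scale z + lift_scale z * cnj (omega z)) * xi z = (lift_scale z * dzbc g z) * xi z"
    using dzbc_xi[OF z] by (simp add: algebra_simps)
  then have nu_coeff: "dzbc lift_scale z + lift_scale z * cnj (omega z) = lift_scale z * dzbc g z"
    using xi_nonzero[OF z] by simp
  have "Dzb Y0 z = dzbc lift_scale z *s nu z
      + lift_scale z *s ((- cnj (xi z) / conf z) *s Dz f z + cnj (omega z) *s nu z)"
    unfolding Y0_def[abs_def] using Dz_scale(2)[OF d(1) differentiable_at[OF smooth_nu z]] Dzb_nu[OF z]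
    by simp
  then have "dzbc g z *s Y0 z - Dzb Y0 z = (lift_scale z * dzbc g z - (dzbc lift_scale z
      + lift_scale z * cnj (omega z))) *s nu z + (lift_scale z * cnj (xi z) / conf z) *s Dz f z"
    unfolding Y0_def by (simp add: vec_eq_iff algebra_simps)
  then have "dzbc g z *s Y0 z - Dzb Y0 z = (lift_scale z * cnj (xi z) / conf z) *s Dz f z"
    using nu_coeff by simp
  moreover have "exp (g z) = complex_of_real (sqrt 2) * (lift_scale z * xi z)"
    using g_eq[OF z] by (simp add: field_simps)
  then have "(complex_of_real (sqrt 2) * exp (g z)) * (lift_scale z * cnj (xi z) / conf z)
      = 2 * (lift_scale z * lift_scale z * (xi z * cnj (xi z)) / conf z)"
    by (simp add: field_simps flip: of_real_mult)
  ultimately show ?thesis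
    using lift_scale_normalised[OF z] by simp
qed

lemma hopf_polar:
  fixes \<theta> :: "complex \<Rightarrow> real" and k :: "complex \<Rightarrow> complex"
  defines "g \<equiv> \<lambda>w. complex_of_real (u w) + \<i> * complex_of_real (\<theta> w)"
  assumes z: "z \<in> U" and \<theta>: "smooth_on U \<theta>"
    and polar: "\<forall>w\<in>U. xi w = complex_of_real (cmod (xi w)) * exp (\<i> * complex_of_real (\<theta> w))"
    and k: "\<forall>w\<in>U. hopf Y0 w = k w *s f w"
  shows "k z = exp (g z) / complex_of_real (sqrt 2)" and "exp (2 * u z) = 2 * (cmod (k z))\<^sup>2"
    and "Dz f z = (complex_of_real (sqrt 2) * exp (g z)) *s (dzbc g z *s Y0 z - Dzb Y0 z)"
proof -
  have g_eq: "lift_scale w * xi w = exp (g w) / complex_of_real (sqrt 2)" if "w \<in> U" for w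
    unfolding g_def using lift_scale_xi_polar[OF that] polar that by blast
  show k_eq: "k z = exp (g z) / complex_of_real (sqrt 2)"
    using hopf_coefficient[OF z] k z g_eq[OF z] by simp
  have "cmod (k z) = exp (u z) / sqrt 2"
    unfolding k_eq g_def by (simp add: norm_divide)
  then show "exp (2 * u z) = 2 * (cmod (k z))\<^sup>2"
    by (simp add: power_divide power2_eq_square flip: exp_add)
  have "smooth_on U g"
    unfolding g_def using \<theta> u_smooth
    by (intro smooth_on_add[OF U_open] smooth_on_mult[OF U_open] smooth_on_of_real[OF U_open]
        smooth_on_const[OF U_open])
  then show "Dz f z = (complex_of_real (sqrt 2) * exp (g z)) *s (dzbc g z *s Y0 z - Dzb Y0 z)"
    using Dz_f_eq[OF z _ g_eq] by blast
qed

end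

theorem mainTheorem5:
  fixes U :: "complex set"
    and f N1 N2 :: "complex \<Rightarrow> complex^5"
    and u :: "complex \<Rightarrow> real"
  defines "Y0 \<equiv> \<lambda>z. complex_of_real (exp (u z) / (sqrt 2 * cmod (xi1 f N1 z - xi2 f N2 z))) *s (N1 z + N2 z)"
  assumes U_open: "open U"
    and f_smooth: "smooth_on U f" and u_smooth: "smooth_on U u"
    and N1_smooth: "smooth_on U N1" and N2_smooth: "smooth_on U N2"
    and f_sphere: "\<forall>z\<in>U. realv (f z) \<and> lip (f z) (f z) = 1"
    and f_conf: "\<forall>z\<in>U. lip (Dz f z) (Dz f z) = 0 \<and> lip (Dz f z) (Dzb f z) = exp (2 * complex_of_real (u z))"
    and N_real: "\<forall>z\<in>U. realv (N1 z) \<and> realv (N2 z)"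
    and N_normal: "\<forall>z\<in>U. lip (N1 z) (f z) = 0 \<and> lip (N1 z) (Dz f z) = 0 \<and>
                          lip (N2 z) (f z) = 0 \<and> lip (N2 z) (Dz f z) = 0"
    and N_orthonormal: "\<forall>z\<in>U. lip (N1 z) (N1 z) = 1 \<and> lip (N2 z) (N2 z) = -1 \<and> lip (N1 z) (N2 z) = 0"
    and N2_future: "\<forall>z\<in>U. future (N2 z)"
    and marginally_trapped: "\<forall>z\<in>U. lip (meanH f u z) (meanH f u z) = 0"
    and orientation: "\<exists>h :: complex \<Rightarrow> real. \<forall>z\<in>U. meanH f u z = complex_of_real (h z) *s (N1 z + N2 z)"
    and non_isotropic: "\<forall>z\<in>U. (xi1 f N1 z)\<^sup>2 - (xi2 f N2 z)\<^sup>2 \<noteq> 0"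
  shows "(\<forall>Y. canonical_lift U (\<lambda>z. N1 z + N2 z) Y \<longleftrightarrow> (\<forall>z\<in>U. Y z = Y0 z))
    \<and> (\<forall>z\<in>U. Vperp Y0 z = {complex_of_real t *s f z | t. True})
    \<and> (\<forall>z\<in>U. hopf Y0 z = ((xi1 f N1 z - xi2 f N2 z) * complex_of_real (exp (u z)) / complex_of_real (sqrt 2 * cmod (xi1 f N1 z - xi2 f N2 z))) *s f z)
    \<and> (\<forall>\<theta> :: complex \<Rightarrow> real. \<forall>k :: complex \<Rightarrow> complex.
          smooth_on U \<theta> \<and> (\<forall>z\<in>U. xi1 f N1 z - xi2 f N2 z = complex_of_real (cmod (xi1 f N1 z - xi2 f N2 z)) * exp (\<i> * complex_of_real (\<theta> z)))
          \<and> (\<forall>z\<in>U. hopf Y0 z = k z *s f z) \<longrightarrow>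
          (\<forall>z\<in>U. k z = exp (complex_of_real (u z) + \<i> * complex_of_real (\<theta> z)) / complex_of_real (sqrt 2)
               \<and> exp (2 * u z) = 2 * (cmod (k z))\<^sup>2
               \<and> Dz f z = (complex_of_real (sqrt 2) * exp (complex_of_real (u z) + \<i> * complex_of_real (\<theta> z))) *s
                   (dzbc (\<lambda>w. complex_of_real (u w) + \<i> * complex_of_real (\<theta> w)) z *s Y0 z - Dzb Y0 z)))"
proof -
  interpret S: marginally_trapped_chart U f N1 N2 u
    by (unfold_locales; fact)
  have Y0_eq: "Y0 = S.Y0"
    unfolding Y0_def S.Y0_def[abs_def] S.lift_scale_def S.nu_def S.xi_eq ..
  have hopf: "hopf S.Y0 z = (S.xi z * complex_of_real (exp (u z)) / complex_of_real (sqrt 2 * cmod (S.xi z))) *s f z"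
    if "z \<in> U" for z
    using S.hopf_Y0[OF that] unfolding S.lift_scale_def by simp
  show ?thesis
    unfolding Y0_eq S.xi_eq
    using S.canonical_lift_iff S.Vperp_Y0 hopf S.hopf_polar by blast
qed

end
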